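(* Let $p\in\mathbb{C}[z_1,\dots,z_d]$ have no zeros in $\mathbb{D}^d$, multidegree $n$, and vanish to order $M$ at $u=(1,\dots,1)$; write $p(u-\zeta)=\sum_{j\ge M}P_j(\zeta)$ and $\tilde p(u-\zeta)=\sum_{j\ge M}Q_j(\zeta)$ with $P_j,Q_j$ homogeneous of degree $j$. Suppose $f=\tilde p/p$ has non-tangential value $\nu$ at $u$. Then $f$ is non-tangentially $C^1$ at $u$ if and only if $P_M$ divides $Q_{M+1}-\nu P_{M+1}$. More generally, $f$ is non-tangentially $C^k$ at $u$ if and only if \[ F_1=\frac{Q_{M+1}-\nu P_{M+1}}{P_M},\quad F_2=\frac{Q_{M+2}-\nu P_{M+2}-F_1P_{M+1}}{P_M},\ \dots,\ F_k=\frac{Q_{M+k}-\nu P_{M+k}-\sum_{j=1}^{k-1}F_jP_{M+k-j}}{P_M} \] all belong to $\mathbb{C}[\zeta_1,\dots,\zeta_d]$ (each defined once the previous ones are polynomials). In this case $f(u-\zeta)-\big(\nu+\sum_{j=1}^kF_j(\zeta)\big)=o(r^k)$ as $\zeta\to0$ within any $AR_c$, where $r=|\zeta_1|$.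
   Context: $\mathbb{D}$ is the open unit disk; $RHP=\{\zeta\in\mathbb{C}:\mathrm{Re}\,\zeta>0\}$. $\tilde p(z)=z^n\overline{p(1/\bar z)}$ with $z^n=z_1^{n_1}\cdots z_d^{n_d}$. Vanishing to order $M$ at $u$ means the lowest nonzero homogeneous term of $\zeta\mapsto p(u-\zeta)$ has degree $M$. For $\zeta\in RHP^d$ let $D_\zeta=\{|\zeta_1|,\dots,|\zeta_d|,\mathrm{Re}\,\zeta_1,\dots,\mathrm{Re}\,\zeta_d\}$ and for $c>1$, $AR_c=\{\zeta\in RHP^d:1/c\le x/y\le c\ \forall x,y\in D_\zeta\}$. $f$ has non-tangential value $\nu$ at $u$ if $f(u-\zeta)\to\nu$ as $\zeta\to0$ in $AR_c$ for every $c>1$. $f$ is non-tangentially $C^k$ at $u$ if there is a polynomial $L$ of degree at most $k$ with $f(u-\zeta)-L(\zeta)=o(r^k)$, $r=|\zeta_1|$, as $\zeta\to0$ in $AR_c$, for every $c>1$. *)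

theory Defs
  imports "HOL-Analysis.Analysis"
begin

text \<open>Polynomials in the variables indexed by a finite type 'd (so d = CARD('d)),
  represented by their coefficient functions: a monomial is an exponent vector
  'd \<Rightarrow> nat, a polynomial is a finitely supported map from monomials to complex.\<close>

type_synonym 'd cpoly = "('d \<Rightarrow> nat) \<Rightarrow> complex"

definition mpoly :: "'d cpoly \<Rightarrow> bool" where
  "mpoly c \<longleftrightarrow> finite {\<alpha>. c \<alpha> \<noteq> 0}"

definition peval :: "'d::finite cpoly \<Rightarrow> complex ^ 'd \<Rightarrow> complex" where
  "peval c z = (\<Sum>\<alpha>\<in>{\<alpha>. c \<alpha> \<noteq> 0}. c \<alpha> * (\<Prod>i\<in>UNIV. (z $ i) ^ \<alpha> i))"

definition total_deg_mono :: "('d::finite \<Rightarrow> nat) \<Rightarrow> nat" where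
  "total_deg_mono \<alpha> = (\<Sum>i\<in>UNIV. \<alpha> i)"

text \<open>homogeneous of degree j (the zero polynomial is homogeneous of every degree)\<close>
definition homog :: "nat \<Rightarrow> 'd::finite cpoly \<Rightarrow> bool" where
  "homog j c \<longleftrightarrow> (\<forall>\<alpha>. c \<alpha> \<noteq> 0 \<longrightarrow> total_deg_mono \<alpha> = j)"

definition deg_le :: "nat \<Rightarrow> 'd::finite cpoly \<Rightarrow> bool" where
  "deg_le k c \<longleftrightarrow> (\<forall>\<alpha>. c \<alpha> \<noteq> 0 \<longrightarrow> total_deg_mono \<alpha> \<le> k)"

definition multideg :: "'d cpoly \<Rightarrow> ('d \<Rightarrow> nat) \<Rightarrow> bool" where
  "multideg c n \<longleftrightarrow> (\<forall>i. (\<forall>\<alpha>. c \<alpha> \<noteq> 0 \<longrightarrow> \<alpha> i \<le> n i) \<and> (\<exists>\<alpha>. c \<alpha> \<noteq> 0 \<and> \<alpha> i = n i))"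

text \<open>The reflection p~(z) = z^n conj(p(1/conj z)), as a polynomial (coefficientwise).\<close>
definition ptilde :: "('d \<Rightarrow> nat) \<Rightarrow> 'd cpoly \<Rightarrow> 'd cpoly" where
  "ptilde n c \<alpha> = (if (\<forall>i. \<alpha> i \<le> n i) then cnj (c (\<lambda>i. n i - \<alpha> i)) else 0)"

definition polydisc :: "(complex ^ 'd) set" where
  "polydisc = {z. \<forall>i. norm (z $ i) < 1}"

definition unit_pt :: "complex ^ 'd" where
  "unit_pt = (\<chi> i. 1)"

definition Dset :: "complex ^ 'd \<Rightarrow> real set" where
  "Dset \<zeta> = range (\<lambda>i. norm (\<zeta> $ i)) \<union> range (\<lambda>i. Re (\<zeta> $ i))"

definition AR :: "real \<Rightarrow> (complex ^ 'd) set" where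
  "AR c = {\<zeta>. (\<forall>i. 0 < Re (\<zeta> $ i)) \<and> (\<forall>x\<in>Dset \<zeta>. \<forall>y\<in>Dset \<zeta>. 1 / c \<le> x / y \<and> x / y \<le> c)}"

definition nt_value :: "(complex ^ 'd \<Rightarrow> complex) \<Rightarrow> complex ^ 'd \<Rightarrow> complex \<Rightarrow> bool" where
  "nt_value f u \<nu> \<longleftrightarrow> (\<forall>c>1. ((\<lambda>\<zeta>. f (u - \<zeta>)) \<longlongrightarrow> \<nu>) (at 0 within AR c))"

text \<open>g(zeta) = o(r^k) as zeta -> 0 within AR_c, where r = |zeta_{i0}|;
  i0 plays the role of the first coordinate index.\<close>
definition little_o_AR :: "'d \<Rightarrow> real \<Rightarrow> nat \<Rightarrow> (complex ^ 'd \<Rightarrow> complex) \<Rightarrow> bool" where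
  "little_o_AR i0 c k g \<longleftrightarrow>
     (\<forall>e>0. eventually (\<lambda>\<zeta>. norm (g \<zeta>) \<le> e * norm (\<zeta> $ i0) ^ k) (at 0 within AR c))"

definition nt_Ck :: "'d \<Rightarrow> nat \<Rightarrow> (complex ^ 'd \<Rightarrow> complex) \<Rightarrow> complex ^ 'd \<Rightarrow> bool" where
  "nt_Ck i0 k f u \<longleftrightarrow> (\<exists>L. mpoly L \<and> deg_le k L \<and>
      (\<forall>c>1. little_o_AR i0 c k (\<lambda>\<zeta>. f (u - \<zeta>) - peval L \<zeta>)))"

definition homog_expansion :: "(complex ^ 'd \<Rightarrow> complex) \<Rightarrow> (nat \<Rightarrow> 'd::finite cpoly) \<Rightarrow> bool" where
  "homog_expansion g P \<longleftrightarrow> (\<forall>j. mpoly (P j) \<and> homog j (P j)) \<and>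
     (\<exists>N. (\<forall>j>N. P j = (\<lambda>_. 0)) \<and> (\<forall>\<zeta>. g \<zeta> = (\<Sum>j\<le>N. peval (P j) \<zeta>)))"

end

theory Submission
  imports Defs "HOL-Complex_Analysis.Great_Picard"
begin

text \<open>
  Put \<open>g \<zeta> = p (u - \<zeta>)\<close> and \<open>h \<zeta> = p\<^sup>~ (u - \<zeta>)\<close>. On a ray \<open>\<zeta> = t \<eta>\<close> both are polynomials in \<open>t\<close>
  whose coefficients are \<open>P\<^sub>j \<eta>\<close> and \<open>Q\<^sub>j \<eta>\<close>, and \<open>g\<close> vanishes to order exactly \<open>M\<close>. Hence, for a
  polynomial \<open>L\<close> of degree at most \<open>k\<close>, \<open>h/g - L = o(t\<^sup>k)\<close> forces the Taylor coefficients of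
  \<open>h - L g\<close> up to order \<open>M + k\<close> to vanish, i.e. \<open>Q\<^sub>m = \<Sum>\<^sub>i\<^sub>\<le>\<^sub>m L\<^sub>i P\<^sub>m\<^sub>-\<^sub>i\<close>; since \<open>Q\<^sub>m = \<nu> P\<^sub>m\<close> for
  \<open>m \<le> M\<close>, these are exactly the division recurrence for \<open>F\<^sub>j = L\<^sub>j\<close>. The identities are first obtained
  for directions in a small ball around \<open>u\<close> and then extend everywhere by the identity theorem.

  Conversely, if the recurrence holds then \<open>h - L g = O(r\<^sup>M\<^sup>+\<^sup>k\<^sup>+\<^sup>1)\<close> on \<open>AR\<^sub>c\<close>, and \<open>|g| \<ge> \<delta> r\<^sup>M\<close>
  there, where \<open>r = |\<zeta>\<^sub>1|\<close>: the direction \<open>\<zeta> / r\<close> stays in a compact subset of \<open>RHP\<^sup>d\<close>, and \<open>P\<^sub>M\<close> has no zeros in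
  \<open>RHP\<^sup>d\<close> by Hurwitz's theorem, because \<open>t\<^sup>-\<^sup>M g (t x) \<rightarrow> P\<^sub>M x\<close> and \<open>g\<close> has no zeros on \<open>u - \<bbbD>\<^sup>d\<close>.
\<close>

section \<open>Polynomials in several variables\<close>

definition monomial :: "('d::finite \<Rightarrow> nat) \<Rightarrow> complex ^ 'd \<Rightarrow> complex" where
  "monomial \<alpha> z = (\<Prod>i\<in>UNIV. (z $ i) ^ \<alpha> i)"

lemma peval_eq_sum_superset:
  assumes "finite S" "{\<alpha>. c \<alpha> \<noteq> 0} \<subseteq> S"
  shows "peval c z = (\<Sum>\<alpha>\<in>S. c \<alpha> * monomial \<alpha> z)"
  unfolding peval_def monomial_def
  by (rule sum.mono_neutral_left) (use assms in auto)

lemma monomial_scale: "monomial \<alpha> (t *s z) = t ^ total_deg_mono \<alpha> * monomial \<alpha> z"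
  by (simp add: monomial_def total_deg_mono_def power_mult_distrib prod.distrib power_sum)

lemma peval_homog_scale:
  assumes "homog j c"
  shows "peval c (t *s z) = t ^ j * peval c z"
proof -
  have "peval c (t *s z) = (\<Sum>\<alpha>\<in>{\<alpha>. c \<alpha> \<noteq> 0}. t ^ j * (c \<alpha> * monomial \<alpha> z))"
    unfolding peval_def monomial_def[symmetric]
    using assms by (intro sum.cong) (auto simp: monomial_scale homog_def)
  then show ?thesis by (simp add: peval_def monomial_def sum_distrib_left)
qed

lemma peval_zero [simp]: "peval (\<lambda>_. 0) z = 0"
  by (simp add: peval_def)

lemma continuous_on_peval: "continuous_on S (peval c)"
  unfolding peval_def[abs_def] by (intro continuous_intros)

lemma mpoly_zero: "mpoly (\<lambda>_. 0)"
  by (simp add: mpoly_def)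

lemma mpoly_add: "mpoly a \<Longrightarrow> mpoly b \<Longrightarrow> mpoly (\<lambda>\<alpha>. a \<alpha> + b \<alpha>)"
  unfolding mpoly_def by (rule finite_subset[of _ "{\<alpha>. a \<alpha> \<noteq> 0} \<union> {\<alpha>. b \<alpha> \<noteq> 0}"]) auto

lemma mpoly_sum: "finite I \<Longrightarrow> (\<And>j. j \<in> I \<Longrightarrow> mpoly (a j)) \<Longrightarrow> mpoly (\<lambda>\<alpha>. \<Sum>j\<in>I. a j \<alpha>)"
  by (induction I rule: finite_induct) (auto simp: mpoly_zero intro: mpoly_add)

lemma peval_add:
  assumes "mpoly a" "mpoly b"
  shows "peval (\<lambda>\<alpha>. a \<alpha> + b \<alpha>) z = peval a z + peval b z"
proof -
  let ?S = "{\<alpha>. a \<alpha> \<noteq> 0} \<union> {\<alpha>. b \<alpha> \<noteq> 0}"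
  have fin: "finite ?S" using assms by (simp add: mpoly_def)
  show ?thesis
    by (subst (1 2 3) peval_eq_sum_superset[OF fin]) (auto simp: sum.distrib algebra_simps)
qed

lemma peval_sum:
  "finite I \<Longrightarrow> (\<And>j. j \<in> I \<Longrightarrow> mpoly (a j)) \<Longrightarrow> peval (\<lambda>\<alpha>. \<Sum>j\<in>I. a j \<alpha>) z = (\<Sum>j\<in>I. peval (a j) z)"
  by (induction I rule: finite_induct) (auto simp: peval_add mpoly_sum)

definition const_poly :: "complex \<Rightarrow> 'd::finite cpoly" where
  "const_poly v = (\<lambda>\<alpha>. if \<alpha> = (\<lambda>_. 0) then v else 0)"

lemma mpoly_const_poly: "mpoly (const_poly v)"
  unfolding mpoly_def const_poly_def by (rule finite_subset[of _ "{\<lambda>_. 0}"]) auto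

lemma peval_const_poly [simp]: "peval (const_poly v) z = v"
  by (subst peval_eq_sum_superset[of "{\<lambda>_. 0}"]) (auto simp: const_poly_def monomial_def)

lemma deg_le_const_poly: "deg_le k (const_poly v)"
  by (auto simp: deg_le_def const_poly_def total_deg_mono_def)

lemma deg_le_mono: "deg_le j c \<Longrightarrow> j \<le> k \<Longrightarrow> deg_le k c"
  by (auto simp: deg_le_def)

lemma deg_le_add: "deg_le k a \<Longrightarrow> deg_le k b \<Longrightarrow> deg_le k (\<lambda>\<alpha>. a \<alpha> + b \<alpha>)"
  by (auto simp: deg_le_def) (metis add.right_neutral)

lemma deg_le_sum:
  "finite I \<Longrightarrow> (\<And>j. j \<in> I \<Longrightarrow> deg_le k (a j)) \<Longrightarrow> deg_le k (\<lambda>\<alpha>. \<Sum>j\<in>I. a j \<alpha>)"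
  by (induction I rule: finite_induct) (auto simp: deg_le_def[of _ "\<lambda>_. 0"] intro: deg_le_add)

lemma mpoly_imp_deg_le: "mpoly c \<Longrightarrow> \<exists>D. deg_le D c"
  unfolding mpoly_def deg_le_def
  by (rule exI[of _ "Max (total_deg_mono ` {\<alpha>. c \<alpha> \<noteq> 0})"]) auto

definition homog_part :: "nat \<Rightarrow> 'd::finite cpoly \<Rightarrow> 'd cpoly" where
  "homog_part m c = (\<lambda>\<alpha>. if total_deg_mono \<alpha> = m then c \<alpha> else 0)"

lemma mpoly_homog_part: "mpoly c \<Longrightarrow> mpoly (homog_part m c)"
  unfolding mpoly_def homog_part_def by (rule finite_subset[of _ "{\<alpha>. c \<alpha> \<noteq> 0}"]) auto

lemma homog_homog_part: "homog m (homog_part m c)"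
  unfolding homog_def homog_part_def by auto

lemma deg_le_homog_part: "deg_le m (homog_part m c)"
  by (auto simp: deg_le_def homog_part_def)

lemma homog_part_above_degree: "deg_le D c \<Longrightarrow> D < m \<Longrightarrow> homog_part m c = (\<lambda>_. 0)"
  by (auto simp: deg_le_def homog_part_def fun_eq_iff)

lemma peval_eq_sum_homog_parts:
  assumes "mpoly c" "deg_le D c"
  shows "peval c z = (\<Sum>m\<le>D. peval (homog_part m c) z)"
proof -
  let ?S = "{\<alpha>. c \<alpha> \<noteq> 0}"
  have fin: "finite ?S" using assms(1) by (simp add: mpoly_def)
  have "peval c z = (\<Sum>\<alpha>\<in>?S. \<Sum>m\<le>D. homog_part m c \<alpha> * monomial \<alpha> z)"
    unfolding peval_eq_sum_superset[OF fin order.refl]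
  proof (intro sum.cong refl)
    fix \<alpha> assume "\<alpha> \<in> ?S"
    then have "total_deg_mono \<alpha> \<le> D" using assms(2) by (auto simp: deg_le_def)
    then show "c \<alpha> * monomial \<alpha> z = (\<Sum>m\<le>D. homog_part m c \<alpha> * monomial \<alpha> z)"
    proof -
      have "(\<Sum>m\<le>D. homog_part m c \<alpha> * monomial \<alpha> z)
          = (\<Sum>m\<le>D. if m = total_deg_mono \<alpha> then c \<alpha> * monomial \<alpha> z else 0)"
        by (rule sum.cong) (auto simp: homog_part_def)
      with \<open>total_deg_mono \<alpha> \<le> D\<close> show ?thesis by simp
    qed
  qed
  also have "\<dots> = (\<Sum>m\<le>D. peval (homog_part m c) z)"
    by (subst sum.swap, intro sum.cong refl peval_eq_sum_superset[symmetric, OF fin])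
       (auto simp: homog_part_def)
  finally show ?thesis .
qed

lemma peval_scale_eq_sum_homog_parts:
  assumes "mpoly c" "deg_le D c"
  shows "peval c (t *s z) = (\<Sum>m\<le>D. peval (homog_part m c) z * t ^ m)"
  by (simp add: peval_eq_sum_homog_parts[OF assms] peval_homog_scale[OF homog_homog_part] mult.commute)

definition taylor_poly :: "complex \<Rightarrow> nat \<Rightarrow> (nat \<Rightarrow> 'd::finite cpoly) \<Rightarrow> 'd cpoly" where
  "taylor_poly v k F = (\<lambda>\<alpha>. const_poly v \<alpha> + (\<Sum>j\<in>{1..k}. homog_part j (F j) \<alpha>))"

lemma mpoly_taylor_poly: "(\<And>j. j \<in> {1..k} \<Longrightarrow> mpoly (F j)) \<Longrightarrow> mpoly (taylor_poly v k F)"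
  unfolding taylor_poly_def by (intro mpoly_add mpoly_const_poly mpoly_sum mpoly_homog_part) auto

lemma deg_le_taylor_poly: "deg_le k (taylor_poly v k F)"
  unfolding taylor_poly_def
  by (intro deg_le_add deg_le_const_poly deg_le_sum deg_le_mono[OF deg_le_homog_part]) auto

lemma peval_taylor_poly:
  assumes "\<And>j. j \<in> {1..k} \<Longrightarrow> mpoly (F j)"
  shows "peval (taylor_poly v k F) z = v + (\<Sum>j\<in>{1..k}. peval (homog_part j (F j)) z)"
proof -
  have "mpoly (\<lambda>\<alpha>. \<Sum>j\<in>{1..k}. homog_part j (F j) \<alpha>)"
    using assms by (intro mpoly_sum mpoly_homog_part) auto
  moreover have "mpoly (homog_part j (F j))" if "j \<in> {1..k}" for j
    using assms[OF that] by (rule mpoly_homog_part)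
  then have "peval (\<lambda>\<alpha>. \<Sum>j\<in>{1..k}. homog_part j (F j) \<alpha>) z = (\<Sum>j\<in>{1..k}. peval (homog_part j (F j)) z)"
    by (intro peval_sum) auto
  ultimately show ?thesis
    unfolding taylor_poly_def by (simp add: peval_add[OF mpoly_const_poly])
qed

section \<open>Polynomials in one variable\<close>

definition poly_upto :: "(nat \<Rightarrow> 'a::comm_ring_1) \<Rightarrow> nat \<Rightarrow> 'a poly" where
  "poly_upto a D = (\<Sum>m\<le>D. monom (a m) m)"

lemma poly_poly_upto: "poly (poly_upto a D) t = (\<Sum>m\<le>D. a m * t ^ m)"
  by (simp add: poly_upto_def poly_sum poly_monom)

lemma coeff_poly_upto: "coeff (poly_upto a D) m = (if m \<le> D then a m else 0)"
  by (simp add: poly_upto_def coeff_sum)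

lemma degree_poly_upto: "degree (poly_upto a D) \<le> D"
  unfolding poly_upto_def by (rule degree_sum_le) (auto intro: order.trans[OF degree_monom_le])

lemma poly_eq_sum_upto:
  fixes p :: "'a::comm_ring_1 poly"
  assumes "degree p \<le> D"
  shows "poly p x = (\<Sum>i\<le>D. coeff p i * x ^ i)"
  unfolding poly_altdef by (rule sum.mono_neutral_left) (use assms in \<open>auto simp: coeff_eq_0\<close>)

lemma peval_homog_part_eq:
  assumes "mpoly c" and scale: "\<And>t. peval c (t *s \<eta>) = t ^ j * peval c \<eta>"
  shows "peval (homog_part j c) \<eta> = peval c \<eta>"
proof -
  obtain D0 where "deg_le D0 c" using mpoly_imp_deg_le[OF assms(1)] by blast
  define D where "D = max D0 j"
  have D: "deg_le D c" using \<open>deg_le D0 c\<close> by (rule deg_le_mono) (simp add: D_def)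
  define q where "q = poly_upto (\<lambda>m. peval (homog_part m c) \<eta>) D - monom (peval c \<eta>) j"
  have "poly q t = 0" for t
    using peval_scale_eq_sum_homog_parts[OF assms(1) D, of t \<eta>] scale[of t]
    by (simp add: q_def poly_poly_upto poly_monom mult.commute)
  then have "q = 0" by (simp add: poly_eq_poly_eq_iff[symmetric] fun_eq_iff)
  then have "coeff (poly_upto (\<lambda>m. peval (homog_part m c) \<eta>) D) j = coeff (monom (peval c \<eta>) j) j"
    by (simp add: q_def)
  then show ?thesis by (simp add: coeff_poly_upto D_def)
qed

lemma poly_factor_power:
  fixes p :: "'a::comm_ring_1 poly"
  assumes "\<And>i. i < m \<Longrightarrow> coeff p i = 0"
  obtains q where "\<And>t. poly p t = t ^ m * poly q t" "poly q 0 = coeff p m"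
  using assms
proof (induction m arbitrary: p thesis)
  case 0
  show ?case by (rule "0.prems"(1)[of p]) (simp_all add: poly_0_coeff_0)
next
  case (Suc m)
  obtain a p' where p: "p = pCons a p'" by (rule pCons_cases)
  have "a = 0" using Suc.prems(2)[of 0] by (simp add: p)
  obtain q where "\<And>t. poly p' t = t ^ m * poly q t" "poly q 0 = coeff p' m"
  proof (rule Suc.IH)
    show "coeff p' i = 0" if "i < m" for i
      using Suc.prems(2)[of "Suc i"] that by (simp add: p)
  qed auto
  then show ?case by (intro Suc.prems(1)[of q]) (simp_all add: p \<open>a = 0\<close>)
qed

lemma eventually_at_right_0_less_1: "eventually (\<lambda>t::real. 0 < t \<and> t < 1) (at_right 0)"
  by (auto simp: eventually_at_right_field intro!: exI[of _ 1])

lemma coeff_eq_0_if_poly_little_o: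
  fixes p :: "complex poly"
  assumes small: "\<forall>\<epsilon>>0. eventually (\<lambda>t. norm (poly p (of_real t)) \<le> \<epsilon> * t ^ K) (at_right 0)"
    and "m \<le> K"
  shows "coeff p m = 0"
  using \<open>m \<le> K\<close>
proof (induction m rule: less_induct)
  case (less m)
  obtain q where pq: "\<And>t. poly p t = t ^ m * poly q t" and q0: "poly q 0 = coeff p m"
    by (rule poly_factor_power[of m p]) (use less in auto)
  have "norm (coeff p m) \<le> \<epsilon>" if "\<epsilon> > 0" for \<epsilon>
  proof -
    have bound: "eventually (\<lambda>t. norm (poly q (of_real t)) \<le> \<epsilon>) (at_right 0)"
      using small[rule_format, OF that] eventually_at_right_0_less_1
    proof eventually_elim
      case (elim t)
      then have "t ^ K \<le> t ^ m" using less.prems by (intro power_decreasing) auto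
      then have "t ^ m * norm (poly q (of_real t)) \<le> t ^ m * \<epsilon>"
        using elim that by (simp add: pq norm_mult norm_power mult.commute order_trans[OF _ mult_left_mono])
      then show ?case using elim by simp
    qed
    have "((\<lambda>t::real. poly q (of_real t)) \<longlongrightarrow> poly q (of_real 0)) (at_right 0)"
      by (intro tendsto_intros)
    from tendsto_upperbound[OF tendsto_norm[OF this] bound] show ?thesis
      using q0 by (simp add: trivial_limit_at_right_real)
  qed
  then show ?case by (metis dense not_le norm_le_zero_iff)
qed

lemma norm_sum_le_if_low_zero:
  fixes a :: "nat \<Rightarrow> complex"
  assumes low: "\<And>j. j < L \<Longrightarrow> a j = 0" and B: "\<And>j. j \<le> D \<Longrightarrow> norm (a j) \<le> B"
    and r: "0 \<le> r" "r \<le> 1"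
  shows "norm (\<Sum>j\<le>D. a j * of_real r ^ j) \<le> (real D + 1) * B * r ^ L"
proof -
  have "norm (a j * of_real r ^ j) \<le> B * r ^ L" if "j \<le> D" for j
  proof (cases "j < L")
    case True
    have "0 \<le> B" using B[of 0] norm_ge_zero order_trans by blast
    then show ?thesis using True low r by simp
  next
    case False
    then have "r ^ j \<le> r ^ L" using r by (intro power_decreasing) auto
    with B[OF that] r show ?thesis
      by (simp add: norm_mult norm_power mult_mono' order_trans[OF norm_ge_zero])
  qed
  then have "norm (\<Sum>j\<le>D. a j * of_real r ^ j) \<le> (\<Sum>j\<le>D. B * r ^ L)"
    by (intro order.trans[OF norm_sum sum_mono]) auto
  then show ?thesis by (simp add: algebra_simps)
qed

lemma all_le_add_split:
  fixes M k :: nat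
  shows "(\<forall>m\<le>M + k. \<Phi> m) \<longleftrightarrow> (\<forall>m\<le>M. \<Phi> m) \<and> (\<forall>j\<in>{1..k}. \<Phi> (M + j))"
proof
  assume A: "(\<forall>m\<le>M. \<Phi> m) \<and> (\<forall>j\<in>{1..k}. \<Phi> (M + j))"
  show "\<forall>m\<le>M + k. \<Phi> m"
  proof (intro allI impI)
    fix m assume "m \<le> M + k"
    show "\<Phi> m"
    proof (cases "m \<le> M")
      case False
      then have "m - M \<in> {1..k}" "M + (m - M) = m" using \<open>m \<le> M + k\<close> by auto
      with A show ?thesis by metis
    qed (use A in auto)
  qed
qed auto

lemma convolution_below:
  fixes a X :: "nat \<Rightarrow> 'a::semiring_0"
  assumes "\<And>l. l < M \<Longrightarrow> X l = 0" "m \<le> M"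
  shows "(\<Sum>i\<le>m. a i * X (m - i)) = a 0 * X m"
proof -
  have "X (m - i) = 0" if "0 < i" "i \<le> m" for i
    using assms(1)[of "m - i"] assms(2) that by simp
  then have "(\<Sum>i\<le>m. a i * X (m - i)) = (\<Sum>i\<in>{0}. a i * X (m - i))"
    by (intro sum.mono_neutral_right) auto
  then show ?thesis by simp
qed

lemma convolution_split:
  fixes a X :: "nat \<Rightarrow> 'a::semiring_0"
  assumes "\<And>l. l < M \<Longrightarrow> X l = 0" "1 \<le> j"
  shows "(\<Sum>i\<le>M + j. a i * X (M + j - i))
    = a 0 * X (M + j) + a j * X M + (\<Sum>i\<in>{1..<j}. a i * X (M + j - i))"
proof -
  have "X (M + j - i) = 0" if "j < i" "i \<le> M + j" for i
    using assms(1)[of "M + j - i"] that by simp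
  then have "(\<Sum>i\<le>M + j. a i * X (M + j - i))
      = (\<Sum>i\<in>insert 0 (insert j {1..<j}). a i * X (M + j - i))"
    by (intro sum.mono_neutral_right) (auto, metis linorder_neqE_nat mult_zero_right)
  then show ?thesis using assms(2) by (simp add: add.assoc)
qed

section \<open>Polynomial functions on complex lines\<close>

definition poly_on_lines :: "(complex ^ 'd \<Rightarrow> complex) \<Rightarrow> bool" where
  "poly_on_lines f \<longleftrightarrow> (\<forall>a w. \<exists>q. \<forall>s. f (a + s *s w) = poly q s)"

lemma poly_on_lines_const: "poly_on_lines (\<lambda>_. v)"
  unfolding poly_on_lines_def by (auto intro: exI[of _ "[:v:]"])

lemma poly_on_lines_nth: "poly_on_lines (\<lambda>z. z $ i)"
  unfolding poly_on_lines_def by (auto intro!: exI[of _ "[:_ $ i, _ $ i:]"] simp: algebra_simps)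

lemma poly_on_lines_add: "poly_on_lines f \<Longrightarrow> poly_on_lines g \<Longrightarrow> poly_on_lines (\<lambda>z. f z + g z)"
  unfolding poly_on_lines_def by (metis poly_add)

lemma poly_on_lines_diff: "poly_on_lines f \<Longrightarrow> poly_on_lines g \<Longrightarrow> poly_on_lines (\<lambda>z. f z - g z)"
  unfolding poly_on_lines_def by (metis poly_diff)

lemma poly_on_lines_mult: "poly_on_lines f \<Longrightarrow> poly_on_lines g \<Longrightarrow> poly_on_lines (\<lambda>z. f z * g z)"
  unfolding poly_on_lines_def by (metis poly_mult)

lemma poly_on_lines_power: "poly_on_lines f \<Longrightarrow> poly_on_lines (\<lambda>z. f z ^ n)"
  by (induction n) (auto intro: poly_on_lines_mult poly_on_lines_const)

lemma poly_on_lines_sum: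
  "finite I \<Longrightarrow> (\<And>j. j \<in> I \<Longrightarrow> poly_on_lines (f j)) \<Longrightarrow> poly_on_lines (\<lambda>z. \<Sum>j\<in>I. f j z)"
  by (induction I rule: finite_induct) (auto intro: poly_on_lines_add poly_on_lines_const)

lemma poly_on_lines_prod:
  "finite I \<Longrightarrow> (\<And>j. j \<in> I \<Longrightarrow> poly_on_lines (f j)) \<Longrightarrow> poly_on_lines (\<lambda>z. \<Prod>j\<in>I. f j z)"
  by (induction I rule: finite_induct) (auto intro: poly_on_lines_mult poly_on_lines_const)

lemma poly_on_lines_scale: "poly_on_lines f \<Longrightarrow> poly_on_lines (\<lambda>z. f (t *s z))"
  unfolding poly_on_lines_def
proof (intro allI)
  fix a w assume "\<forall>a w. \<exists>q. \<forall>s. f (a + s *s w) = poly q s"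
  then obtain q where "\<forall>s. f (t *s a + s *s (t *s w)) = poly q s" by blast
  moreover have "t *s (a + s *s w) = t *s a + s *s (t *s w)" for s
    by (simp add: vec_eq_iff algebra_simps)
  ultimately show "\<exists>q. \<forall>s. f (t *s (a + s *s w)) = poly q s" by metis
qed

lemma poly_on_lines_peval: "poly_on_lines (peval c)"
proof (cases "finite {\<alpha>. c \<alpha> \<noteq> 0}")
  case True
  then show ?thesis
    unfolding peval_def[abs_def]
    by (intro poly_on_lines_sum poly_on_lines_mult poly_on_lines_const poly_on_lines_prod
        poly_on_lines_power poly_on_lines_nth) auto
next
  case False
  then have "peval c = (\<lambda>_. 0)" by (simp add: peval_def fun_eq_iff)
  then show ?thesis by (simp add: poly_on_lines_const)
qed

lemma holomorphic_on_line:
  assumes "poly_on_lines f"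
  shows "(\<lambda>s. f (a + s *s w)) holomorphic_on A"
proof -
  obtain q where "\<And>s. f (a + s *s w) = poly q s" using assms unfolding poly_on_lines_def by blast
  moreover have "poly q holomorphic_on A" by (intro holomorphic_intros)
  ultimately show ?thesis by simp
qed

lemma of_real_smult: "complex_of_real x *s w = x *\<^sub>R w"
  unfolding vec_eq_iff vector_smult_component vector_scaleR_component
  by (simp add: scaleR_conv_of_real)

lemma poly_on_lines_eq_0_if_ball:
  assumes "poly_on_lines f" "e > 0" "\<And>z. z \<in> ball a e \<Longrightarrow> f z = 0"
  shows "f z = 0"
proof -
  define w where "w = z - a"
  obtain q where q: "\<And>s. f (a + s *s w) = poly q s"
    using assms(1) unfolding poly_on_lines_def by blast
  define d where "d = e / (norm w + 1)"
  have w1: "norm w + 1 > 0" using add_nonneg_pos[OF norm_ge_zero zero_less_one] .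
  have "poly q (of_real s) = 0" if "s \<in> {0<..<d}" for s
  proof -
    have "s * norm w < d * (norm w + 1)"
      using that by (intro mult_strict_mono') auto
    also have "\<dots> = e" using w1 by (simp add: d_def)
    finally have "a + of_real s *s w \<in> ball a e"
      using that by (simp add: of_real_smult dist_norm)
    then show ?thesis using assms(3) q[of "of_real s"] by simp
  qed
  then have "complex_of_real ` {0<..<d} \<subseteq> {s. poly q s = 0}" by auto
  moreover have "infinite (complex_of_real ` {0<..<d})"
    using assms(2) w1 by (subst finite_image_iff) (auto simp: inj_on_def d_def)
  ultimately have "q = 0" using poly_roots_finite finite_subset by blast
  then show ?thesis using q[of 1] by (simp add: w_def)
qed

lemma poly_on_lines_eq_0_if_mult_eq_0:
  assumes "poly_on_lines f" "continuous_on UNIV g" "g z0 \<noteq> 0" "\<And>z. g z * f z = (0::complex)"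
  shows "f z = 0"
proof -
  have "open {y. g y \<noteq> 0}" by (rule open_Collect_neq[OF assms(2) continuous_on_const])
  then obtain e where e: "e > 0" "ball z0 e \<subseteq> {y. g y \<noteq> 0}"
    using assms(3) by (auto simp: open_contains_ball)
  then have "f y = 0" if "y \<in> ball z0 e" for y using that assms(4)[of y] by auto
  then show ?thesis by (rule poly_on_lines_eq_0_if_ball[OF assms(1) e(1)])
qed

lemma homog_scale_extend_0:
  assumes "poly_on_lines f" "\<And>s. s \<noteq> 0 \<Longrightarrow> f (s *s \<eta>) = s ^ j * f \<eta>"
  shows "f (s *s \<eta>) = s ^ j * f \<eta>"
proof -
  obtain q where q: "\<And>s. f (0 + s *s \<eta>) = poly q s" using assms(1) unfolding poly_on_lines_def by blast
  have "UNIV - {0} \<subseteq> {s. poly (q - monom (f \<eta>) j) s = 0}"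
    using q assms(2) by (auto simp: poly_monom mult.commute)
  moreover have "infinite (UNIV - {0::complex})" by (simp add: infinite_UNIV_char_0)
  ultimately have "q - monom (f \<eta>) j = 0" using poly_roots_finite finite_subset by blast
  then have "q = monom (f \<eta>) j" by simp
  then show ?thesis using q[of s] by (simp add: poly_monom mult.commute)
qed

lemma base_expansion_unique:
  assumes "\<forall>k<n. a k < B" "\<forall>k<n. b k < (B::nat)"
    and "(\<Sum>k<n. a k * B ^ k) = (\<Sum>k<n. b k * B ^ k)"
  shows "\<forall>k<n. a k = b k"
  using assms
proof (induction n arbitrary: a b)
  case 0
  then show ?case by simp
next
  case (Suc n)
  have shift: "(\<Sum>k<Suc n. f k * B ^ k) = f 0 + B * (\<Sum>k<n. f (Suc k) * B ^ k)" for f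
    by (simp only: sum.lessThan_Suc_shift) (simp add: sum_distrib_left algebra_simps)
  have eq: "a 0 + B * (\<Sum>k<n. a (Suc k) * B ^ k) = b 0 + B * (\<Sum>k<n. b (Suc k) * B ^ k)"
    using Suc.prems(3) by (simp only: shift)
  have "a 0 < B" "b 0 < B" using Suc.prems by auto
  with arg_cong[OF eq, of "\<lambda>x. x mod B"] have a0: "a 0 = b 0" by simp
  with eq \<open>a 0 < B\<close> have "(\<Sum>k<n. a (Suc k) * B ^ k) = (\<Sum>k<n. b (Suc k) * B ^ k)" by simp
  then have "\<forall>k<n. a (Suc k) = b (Suc k)"
    by (intro Suc.IH) (use Suc.prems in auto)
  with a0 show ?case by (metis less_Suc_eq_0_disj)
qed

text \<open>Kronecker substitution: \<open>z_i = t ^ (B ^ idx i)\<close>, with \<open>B\<close> exceeding every exponent of \<open>c\<close>,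
  sends distinct monomials of \<open>c\<close> to distinct powers of \<open>t\<close>.\<close>

lemma ex_peval_nonzero:
  fixes c :: "'d::finite cpoly"
  assumes "mpoly c" "c \<noteq> (\<lambda>_. 0)"
  shows "\<exists>z. peval c z \<noteq> 0"
proof -
  let ?S = "{\<alpha>. c \<alpha> \<noteq> 0}"
  have fin: "finite ?S" using assms(1) by (simp add: mpoly_def)
  obtain \<alpha>0 where \<alpha>0: "c \<alpha>0 \<noteq> 0" using assms(2) by auto
  obtain idx :: "'d \<Rightarrow> nat" where idx: "bij_betw idx UNIV {..<CARD('d)}"
    using ex_bij_betw_finite_nat[of "UNIV::'d set"] by (auto simp: atLeast0LessThan)
  define B where "B = Suc (Max ((\<lambda>(\<alpha>, i). \<alpha> i) ` (?S \<times> UNIV)))"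
  have B: "\<alpha> i < B" if "\<alpha> \<in> ?S" for \<alpha> i
    using that fin by (auto simp: B_def less_Suc_eq_le intro!: Max_ge)
  define w where "w \<alpha> = (\<Sum>i\<in>UNIV. \<alpha> i * B ^ idx i)" for \<alpha> :: "'d \<Rightarrow> nat"
  define iv where "iv = inv_into UNIV idx"
  have iv: "iv (idx i) = i" "idx i < CARD('d)" for i
    using idx by (auto simp: iv_def bij_betw_def)
  have w_digits: "w \<alpha> = (\<Sum>k<CARD('d). \<alpha> (iv k) * B ^ k)" for \<alpha>
    unfolding w_def using sum.reindex_bij_betw[OF idx, of "\<lambda>k. \<alpha> (iv k) * B ^ k"] iv by simp
  have w_inj: "\<alpha> = \<beta>" if "\<alpha> \<in> ?S" "\<beta> \<in> ?S" "w \<alpha> = w \<beta>" for \<alpha> \<beta>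
  proof -
    have "\<forall>k<CARD('d). \<alpha> (iv k) = \<beta> (iv k)"
      by (rule base_expansion_unique) (use that B w_digits in auto)
    then show ?thesis using iv by (metis ext)
  qed
  define q where "q = (\<Sum>\<alpha>\<in>?S. monom (c \<alpha>) (w \<alpha>))"
  have "coeff q (w \<alpha>0) = (\<Sum>\<alpha>\<in>?S. if \<alpha> = \<alpha>0 then c \<alpha> else 0)"
    unfolding q_def coeff_sum coeff_monom by (rule sum.cong) (use w_inj \<alpha>0 in auto)
  with fin \<alpha>0 have "q \<noteq> 0" by auto
  then obtain t where t: "poly q t \<noteq> 0"
    using poly_roots_finite infinite_UNIV_char_0 by (metis (mono_tags) UNIV_I finite_subset mem_Collect_eq subsetI)
  define z :: "complex ^ 'd" where "z = (\<chi> i. t ^ (B ^ idx i))"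
  have "monomial \<alpha> z = t ^ w \<alpha>" for \<alpha>
    by (simp add: monomial_def z_def w_def power_sum power_mult[symmetric] mult.commute)
  then have "peval c z = poly q t"
    by (simp add: peval_eq_sum_superset[OF fin order.refl] q_def poly_sum poly_monom)
  with t show ?thesis by metis
qed

section \<open>Approach regions and the polydisc\<close>

lemma AR_Re_pos: "\<zeta> \<in> AR c \<Longrightarrow> 0 < Re (\<zeta> $ i)"
  by (simp add: AR_def)

lemma AR_Dset_pos:
  assumes "\<zeta> \<in> AR c" "x \<in> Dset \<zeta>"
  shows "0 < x"
proof -
  obtain i where "x = norm (\<zeta> $ i) \<or> x = Re (\<zeta> $ i)" using assms(2) by (auto simp: Dset_def)
  then show ?thesis using AR_Re_pos[OF assms(1), of i] complex_Re_le_cmod[of "\<zeta> $ i"] by auto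
qed

lemma AR_le_mult:
  assumes "\<zeta> \<in> AR c" "x \<in> Dset \<zeta>" "y \<in> Dset \<zeta>"
  shows "x \<le> c * y"
proof -
  have "x / y \<le> c" using assms by (simp add: AR_def)
  then show ?thesis using AR_Dset_pos[OF assms(1,3)] by (simp add: divide_le_eq)
qed

lemma AR_scaleR:
  assumes "\<zeta> \<in> AR c" "0 < x"
  shows "x *\<^sub>R \<zeta> \<in> AR c"
proof -
  have D: "Dset (x *\<^sub>R \<zeta>) = (\<lambda>v. x * v) ` Dset \<zeta>"
    using assms(2) by (auto simp: Dset_def image_iff)
  show ?thesis using assms by (auto simp: AR_def D)
qed

lemma ball_unit_pt_subset_AR:
  assumes "1 < c"
  shows "ball unit_pt ((c - 1) / (c + 1)) \<subseteq> AR c"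
proof
  fix \<zeta> :: "complex ^ 'd" assume "\<zeta> \<in> ball unit_pt ((c - 1) / (c + 1))"
  then have near: "norm (\<zeta> $ i - 1) < (c - 1) / (c + 1)" for i
    using Finite_Cartesian_Product.norm_nth_le[of "\<zeta> - unit_pt" i] by (simp add: unit_pt_def dist_norm norm_minus_commute)
  have D: "2 / (c + 1) < x \<and> x < 2 * c / (c + 1)" if x: "x \<in> Dset \<zeta>" for x
  proof -
    obtain i where "x = norm (\<zeta> $ i) \<or> x = Re (\<zeta> $ i)" using x by (auto simp: Dset_def)
    moreover have "\<bar>norm (\<zeta> $ i) - 1\<bar> \<le> norm (\<zeta> $ i - 1)"
      by (metis norm_one norm_triangle_ineq3)
    moreover have "\<bar>Re (\<zeta> $ i) - 1\<bar> \<le> norm (\<zeta> $ i - 1)"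
      by (metis abs_Re_le_cmod minus_complex.simps(1) one_complex.simps(1))
    moreover have "1 - (c - 1) / (c + 1) = 2 / (c + 1)" "1 + (c - 1) / (c + 1) = 2 * c / (c + 1)"
      using assms by (auto simp: field_simps)
    ultimately show ?thesis using near[of i] by auto
  qed
  have pos: "0 < x" if "x \<in> Dset \<zeta>" for x
    using D[OF that] assms by (smt (verit) divide_pos_pos)
  have le: "x \<le> c * y" if "x \<in> Dset \<zeta>" "y \<in> Dset \<zeta>" for x y
  proof -
    have "2 * c / (c + 1) = c * (2 / (c + 1))" by simp
    then show ?thesis using D[OF that(1)] D[OF that(2)] assms by (smt (verit) mult_less_cancel_left_pos)
  qed
  have "1 / c \<le> x / y \<and> x / y \<le> c" if "x \<in> Dset \<zeta>" "y \<in> Dset \<zeta>" for x y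
    using le[OF that] le[OF that(2,1)] pos[OF that(1)] pos[OF that(2)] assms
    by (simp add: divide_le_eq le_divide_eq field_simps)
  moreover have "0 < Re (\<zeta> $ i)" for i by (rule pos) (auto simp: Dset_def)
  ultimately show "\<zeta> \<in> AR c" by (simp add: AR_def)
qed

lemma filterlim_ray_AR:
  assumes "\<eta> \<in> AR c"
  shows "filterlim (\<lambda>t. t *\<^sub>R \<eta>) (at 0 within AR c) (at_right (0::real))"
proof (rule filterlim_at_withinI)
  have "((\<lambda>t. t *\<^sub>R \<eta>) \<longlongrightarrow> 0 *\<^sub>R \<eta>) (at_right (0::real))"
    by (intro tendsto_intros)
  then show "((\<lambda>t. t *\<^sub>R \<eta>) \<longlongrightarrow> 0) (at_right (0::real))" by simp
  have "\<eta> \<noteq> 0" using AR_Re_pos[OF assms, of undefined] by auto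
  then show "eventually (\<lambda>t. t *\<^sub>R \<eta> \<in> AR c - {0}) (at_right 0)"
    unfolding eventually_at_right_field by (intro exI[of _ 1]) (auto intro: AR_scaleR[OF assms])
qed

lemma norm_one_minus_lt_1:
  fixes z :: complex
  assumes "0 < t" "t * norm z ^ 2 < 2 * Re z"
  shows "norm (1 - of_real t * z) < 1"
proof -
  have "norm (1 - of_real t * z) ^ 2 = (1 - t * Re z) ^ 2 + (t * Im z) ^ 2"
    by (simp add: cmod_power2)
  also have "\<dots> = 1 - t * (2 * Re z - t * norm z ^ 2)"
    unfolding cmod_power2 by (simp add: power2_eq_square algebra_simps)
  also have "\<dots> < 1" using assms by simp
  finally show ?thesis by (simp add: power_less_one_iff)
qed

lemma eventually_ray_in_polydisc:
  assumes "\<And>i. 0 < Re (\<eta> $ i)"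
  shows "eventually (\<lambda>t. unit_pt - t *\<^sub>R \<eta> \<in> polydisc) (at_right (0::real))"
proof -
  have "eventually (\<lambda>t. norm (1 - of_real t * \<eta> $ i) < 1) (at_right 0)" for i
  proof -
    have "eventually (\<lambda>t. t * norm (\<eta> $ i) ^ 2 < 2 * Re (\<eta> $ i)) (at_right 0)"
      using assms[of i] by (intro order_tendstoD) (auto intro!: tendsto_eq_intros)
    then show ?thesis
      using eventually_at_right_0_less_1 by eventually_elim (auto intro: norm_one_minus_lt_1)
  qed
  then have "eventually (\<lambda>t. \<forall>i. norm (1 - of_real t * \<eta> $ i) < 1) (at_right 0)"
    by (rule eventually_all_finite)
  then show ?thesis
    by eventually_elim (simp add: polydisc_def unit_pt_def, simp add: scaleR_conv_of_real)
qed

definition rhp_box :: "real \<Rightarrow> (complex ^ 'd) set" where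
  "rhp_box c = {\<eta>. \<forall>i. norm (\<eta> $ i) \<le> c \<and> 1 / c \<le> Re (\<eta> $ i)}"

lemma compact_rhp_box: "compact (rhp_box c :: (complex ^ 'd::finite) set)" (is "compact ?B")
proof -
  have "?B = (\<Inter>i. {\<eta>. norm (\<eta> $ i) \<le> c} \<inter> {\<eta>. 1 / c \<le> Re (\<eta> $ i)})"
    by (auto simp: rhp_box_def)
  also have "closed \<dots>"
    by (intro closed_INT ballI closed_Int closed_Collect_le continuous_intros continuous_on_id)
  finally have "closed ?B" .
  moreover have "?B \<subseteq> cball 0 (\<Sum>i\<in>(UNIV::'d set). c)"
  proof
    fix \<eta> assume "\<eta> \<in> ?B"
    then have "norm \<eta> \<le> (\<Sum>i\<in>(UNIV::'d set). c)"
      using L2_set_le_sum[of UNIV "\<lambda>i. norm (\<eta> $ i)"] sum_mono[of UNIV "\<lambda>i. norm (\<eta> $ i)" "\<lambda>i. c"]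
      by (auto simp: rhp_box_def norm_vec_def)
    then show "\<eta> \<in> cball 0 (\<Sum>i\<in>(UNIV::'d set). c)" by simp
  qed
  ultimately show ?thesis
    using bounded_subset[OF bounded_cball] by (auto simp: compact_eq_bounded_closed)
qed

lemma rhp_box_Re_pos: "0 < c \<Longrightarrow> \<eta> \<in> rhp_box c \<Longrightarrow> 0 < Re (\<eta> $ i)"
  unfolding rhp_box_def by (smt (verit) divide_pos_pos mem_Collect_eq)

lemma AR_normalized_in_rhp_box:
  assumes "\<eta> \<in> AR c" "norm (\<eta> $ i) = 1" "0 < c"
  shows "\<eta> \<in> rhp_box c"
proof -
  have "norm (\<eta> $ j) \<le> c * norm (\<eta> $ i)" "norm (\<eta> $ i) \<le> c * Re (\<eta> $ j)" for j
    by (rule AR_le_mult[OF assms(1)]; simp add: Dset_def)+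
  then show ?thesis using assms(2,3) by (simp add: rhp_box_def divide_le_eq mult.commute)
qed

lemma AR_eq_scaled_rhp_box:
  assumes "\<zeta> \<in> AR c" "1 < c"
  obtains \<eta> where "\<eta> \<in> rhp_box c" "\<zeta> = norm (\<zeta> $ i) *\<^sub>R \<eta>" "0 < norm (\<zeta> $ i)"
proof -
  have r: "0 < norm (\<zeta> $ i)" by (rule AR_Dset_pos[OF assms(1)]) (simp add: Dset_def)
  define \<eta> where "\<eta> = (1 / norm (\<zeta> $ i)) *\<^sub>R \<zeta>"
  have "\<eta> \<in> AR c" "norm (\<eta> $ i) = 1" using assms(1) r by (auto simp: \<eta>_def intro: AR_scaleR)
  then have "\<eta> \<in> rhp_box c" by (rule AR_normalized_in_rhp_box) (use assms(2) in simp)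
  moreover have "\<zeta> = norm (\<zeta> $ i) *\<^sub>R \<eta>" using r by (simp add: \<eta>_def)
  ultimately show ?thesis using that r by blast
qed

lemma eventually_norm_nth_less:
  assumes "0 < d"
  shows "eventually (\<lambda>\<zeta>. norm (\<zeta> $ i) < d) (at (0 :: complex ^ 'd::finite) within S)"
proof -
  have "((\<lambda>\<zeta>. norm (\<zeta> $ i)) \<longlongrightarrow> norm ((0 :: complex ^ 'd) $ i)) (at 0 within S)"
    by (intro tendsto_intros)
  then show ?thesis using assms by (auto intro: order_tendstoD)
qed

lemma compact_uniform_bound:
  assumes "compact K" "finite I" "\<And>i. i \<in> I \<Longrightarrow> continuous_on K (f i)"
  shows "\<exists>B. \<forall>i\<in>I. \<forall>x\<in>K. norm (f i x :: 'b::real_normed_vector) \<le> B"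
proof -
  have "continuous_on K (\<lambda>x. \<Sum>i\<in>I. norm (f i x))"
    by (intro continuous_intros assms(3))
  then have "bounded ((\<lambda>x. \<Sum>i\<in>I. norm (f i x)) ` K)"
    by (intro compact_imp_bounded compact_continuous_image assms(1))
  then obtain B where B: "\<And>x. x \<in> K \<Longrightarrow> norm (\<Sum>i\<in>I. norm (f i x)) \<le> B"
    unfolding bounded_iff by auto
  have "norm (f i x) \<le> B" if "i \<in> I" "x \<in> K" for i x
    using member_le_sum[of i I "\<lambda>i. norm (f i x)"] B[OF that(2)] that(1) assms(2) by auto
  then show ?thesis by blast
qed

lemma compact_lower_bound:
  assumes "compact K" "continuous_on K f" "\<And>x. x \<in> K \<Longrightarrow> f x \<noteq> (0::'b::real_normed_vector)"
  shows "\<exists>\<delta>>0. \<forall>x\<in>K. \<delta> \<le> norm (f x)"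
proof (cases "K = {}")
  case False
  have "continuous_on K (\<lambda>x. norm (f x))" by (intro continuous_intros assms(2))
  from continuous_attains_inf[OF assms(1) False this] obtain x0 where
    "x0 \<in> K" "\<forall>y\<in>K. norm (f x0) \<le> norm (f y)" by auto
  then show ?thesis using assms(3)[of x0] by (intro exI[of _ "norm (f x0)"]) auto
qed (auto intro: exI[of _ 1])

lemma little_o_AR_on_ray:
  assumes "little_o_AR i c K \<phi>" "\<eta> \<in> AR c" "0 < \<epsilon>"
  shows "eventually (\<lambda>t. norm (\<phi> (t *\<^sub>R \<eta>)) \<le> \<epsilon> * t ^ K) (at_right 0)"
proof -
  define a where "a = norm (\<eta> $ i) ^ K"
  have "0 \<le> a" by (simp add: a_def)
  then have "0 < \<epsilon> / (a + 1)" using assms(3) by simp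
  with assms(1) have "eventually (\<lambda>\<zeta>. norm (\<phi> \<zeta>) \<le> \<epsilon> / (a + 1) * norm (\<zeta> $ i) ^ K) (at 0 within AR c)"
    unfolding little_o_AR_def by blast
  then have "eventually (\<lambda>t. norm (\<phi> (t *\<^sub>R \<eta>)) \<le> \<epsilon> / (a + 1) * norm ((t *\<^sub>R \<eta>) $ i) ^ K) (at_right 0)"
    using filterlim_ray_AR[OF assms(2)] unfolding filterlim_iff by blast
  then show ?thesis
    using eventually_at_right_0_less_1
  proof eventually_elim
    case (elim t)
    have "\<epsilon> / (a + 1) * norm ((t *\<^sub>R \<eta>) $ i) ^ K = (\<epsilon> * t ^ K) * (a / (a + 1))"
      using elim(2) by (simp add: a_def power_mult_distrib field_simps)
    also have "\<dots> \<le> \<epsilon> * t ^ K" using assms(3) elim(2) \<open>0 \<le> a\<close> by (intro mult_left_le) auto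
    finally show ?case using elim(1) by linarith
  qed
qed

lemma little_o_AR_0_if_tendsto:
  assumes "(\<phi> \<longlongrightarrow> 0) (at 0 within AR c)"
  shows "little_o_AR i c 0 \<phi>"
  unfolding little_o_AR_def
proof (intro allI impI)
  fix e :: real assume "0 < e"
  from tendstoD[OF assms this] show "eventually (\<lambda>\<zeta>. norm (\<phi> \<zeta>) \<le> e * norm (\<zeta> $ i) ^ 0) (at 0 within AR c)"
    by (auto simp: dist_norm elim: eventually_mono)
qed

lemma little_o_AR_if_big_O_Suc:
  assumes "eventually (\<lambda>\<zeta>. norm (\<phi> \<zeta>) \<le> C * norm (\<zeta> $ i) ^ Suc K) (at 0 within AR c)"
  shows "little_o_AR i c K \<phi>"
  unfolding little_o_AR_def
proof (intro allI impI)
  fix e :: real assume "0 < e"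
  have "((\<lambda>\<zeta>. \<bar>C\<bar> * norm (\<zeta> $ i)) \<longlongrightarrow> 0) (at 0 within AR c)"
    by (auto intro!: tendsto_eq_intros)
  then have "eventually (\<lambda>\<zeta>. \<bar>C\<bar> * norm (\<zeta> $ i) < e) (at 0 within AR c)"
    using \<open>0 < e\<close> by (auto intro: order_tendstoD)
  with assms show "eventually (\<lambda>\<zeta>. norm (\<phi> \<zeta>) \<le> e * norm (\<zeta> $ i) ^ K) (at 0 within AR c)"
  proof eventually_elim
    case (elim \<zeta>)
    have "C * norm (\<zeta> $ i) ^ Suc K \<le> (\<bar>C\<bar> * norm (\<zeta> $ i)) * norm (\<zeta> $ i) ^ K"
      by (simp add: mult.assoc mult_right_mono)
    also have "\<dots> \<le> e * norm (\<zeta> $ i) ^ K" using elim(2) by (intro mult_right_mono) auto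
    finally show ?case using elim(1) by linarith
  qed
qed

lemma ball_unit_pt_Re_pos:
  assumes "\<eta> \<in> ball unit_pt 1"
  shows "0 < Re (\<eta> $ i)"
proof -
  have "norm (1 - \<eta> $ i) < 1"
    using Finite_Cartesian_Product.norm_nth_le[of "unit_pt - \<eta>" i] assms
    by (simp add: unit_pt_def dist_norm)
  then show ?thesis using abs_Re_le_cmod[of "1 - \<eta> $ i"] by auto
qed

lemma unit_pt_minus_in_polydisc:
  assumes "\<And>i. \<delta> < Re (z $ i)" "\<And>i. norm (z $ i) \<le> K" "0 < \<delta>" "0 < t" "t \<le> \<delta> / (K\<^sup>2 + 1)"
  shows "unit_pt - t *\<^sub>R z \<in> polydisc"
proof -
  have "norm (1 - of_real t * z $ i) < 1" for i
  proof (rule norm_one_minus_lt_1)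
    have "t * norm (z $ i) ^ 2 \<le> \<delta> / (K\<^sup>2 + 1) * K\<^sup>2"
      using assms by (intro mult_mono power_mono) auto
    also have "\<dots> < \<delta>"
    proof -
      have "K\<^sup>2 / (K\<^sup>2 + 1) < 1" by (simp add: add_nonneg_pos)
      from mult_strict_left_mono[OF this assms(3)] show ?thesis by simp
    qed
    finally show "t * norm (z $ i) ^ 2 < 2 * Re (z $ i)" using assms(1)[of i] assms(3) by linarith
  qed (fact assms)
  then show ?thesis by (simp add: polydisc_def unit_pt_def, simp add: scaleR_conv_of_real)
qed

lemma ex_line_region_Re_pos:
  fixes \<zeta>0 \<eta> :: "complex ^ 'd::finite"
  assumes \<zeta>0: "\<And>i. 0 < Re (\<zeta>0 $ i)" and \<eta>: "\<And>i. 0 < Re (\<eta> $ i)"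
  obtains S \<delta> K where "open S" "connected S" "0 \<in> S" "1 \<in> S" "0 < \<delta>"
    "\<And>s i. s \<in> S \<Longrightarrow> \<delta> < Re ((\<zeta>0 + s *s (\<eta> - \<zeta>0)) $ i)"
    "\<And>s i. s \<in> S \<Longrightarrow> norm ((\<zeta>0 + s *s (\<eta> - \<zeta>0)) $ i) \<le> K"
proof -
  define \<delta> where "\<delta> = Min (range (\<lambda>i. min (Re (\<zeta>0 $ i)) (Re (\<eta> $ i)))) / 2"
  have pos: "0 < min (Re (\<zeta>0 $ i)) (Re (\<eta> $ i))" for i
    using \<zeta>0 \<eta> by simp
  have "Min (range (\<lambda>i. min (Re (\<zeta>0 $ i)) (Re (\<eta> $ i)))) \<le> min (Re (\<zeta>0 $ i)) (Re (\<eta> $ i))" for i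
    by (rule Min_le) auto
  with pos have \<delta>: "0 < \<delta>" "\<delta> < Re (\<zeta>0 $ i)" "\<delta> < Re (\<eta> $ i)" for i
    unfolding \<delta>_def by (auto simp: Min_gr_iff) (smt (verit) pos)+
  define S where "S = {s. \<forall>i. \<delta> < Re ((\<zeta>0 + s *s (\<eta> - \<zeta>0)) $ i)} \<inter> ball 0 2"
  have "S = (\<Inter>i. {s. \<delta> - Re (\<zeta>0 $ i) < cnj ((\<eta> - \<zeta>0) $ i) \<bullet> s}) \<inter> ball 0 2"
    by (auto simp: S_def inner_complex_def algebra_simps)
  then have "open S" "convex S"
    by (auto intro!: open_Int open_INT open_halfspace_gt convex_Int convex_INT convex_halfspace_gt)
  moreover have "0 \<in> S" "1 \<in> S" using \<delta> by (auto simp: S_def)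
  moreover have "\<delta> < Re ((\<zeta>0 + s *s (\<eta> - \<zeta>0)) $ i)" if "s \<in> S" for s i
    using that by (simp add: S_def)
  moreover have "norm ((\<zeta>0 + s *s (\<eta> - \<zeta>0)) $ i) \<le> norm \<zeta>0 + 2 * norm (\<eta> - \<zeta>0)" if "s \<in> S" for s i
  proof -
    have "norm ((\<zeta>0 + s *s (\<eta> - \<zeta>0)) $ i) \<le> norm (\<zeta>0 $ i) + norm s * norm ((\<eta> - \<zeta>0) $ i)"
      by (simp only: vector_add_component vector_smult_component norm_triangle_le norm_mult)
    also have "\<dots> \<le> norm \<zeta>0 + 2 * norm (\<eta> - \<zeta>0)" using that
      Finite_Cartesian_Product.norm_nth_le[of \<zeta>0 i] Finite_Cartesian_Product.norm_nth_le[of "\<eta> - \<zeta>0" i]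
      by (auto simp: S_def intro!: add_mono mult_mono)
    finally show ?thesis .
  qed
  ultimately show ?thesis
    using that \<delta>(1) convex_connected by blast
qed

lemma uniform_limit_const_sequence:
  "(c \<longlongrightarrow> l) F \<Longrightarrow> uniform_limit S (\<lambda>n _. c n) (\<lambda>_. l) F"
  by (auto intro!: uniform_limitI dest: tendstoD elim: eventually_mono)

lemma uniform_limit_sum:
  fixes f :: "'i \<Rightarrow> 'n \<Rightarrow> 'a \<Rightarrow> 'b::real_normed_vector"
  assumes "finite I" "\<And>i. i \<in> I \<Longrightarrow> uniform_limit S (f i) (l i) F"
  shows "uniform_limit S (\<lambda>n x. \<Sum>i\<in>I. f i n x) (\<lambda>x. \<Sum>i\<in>I. l i x) F"
  using assms by (induction I rule: finite_induct) (auto intro: uniform_limit_add uniform_limit_const)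

lemma uniform_limit_lowest_order:
  fixes a :: "nat \<Rightarrow> 'a::topological_space \<Rightarrow> 'b::real_normed_field"
  assumes "compact C" "\<And>j. continuous_on C (a j)" "\<tau> \<longlonglongrightarrow> 0" "M \<le> N"
  shows "uniform_limit C (\<lambda>m s. \<Sum>j\<in>{M..N}. a j s * \<tau> m ^ (j - M)) (a M) sequentially"
proof -
  have "uniform_limit C (\<lambda>m s. \<Sum>j\<in>{M..N}. a j s * \<tau> m ^ (j - M))
      (\<lambda>s. \<Sum>j\<in>{M..N}. a j s * 0 ^ (j - M)) sequentially"
  proof (intro uniform_limit_sum uniform_lim_mult uniform_limit_const uniform_limit_const_sequence)
    show "bounded (a j ` C)" for j
      by (intro compact_imp_bounded compact_continuous_image assms(1,2))
  qed (auto intro!: tendsto_eq_intros assms(3) simp: image_constant_conv)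
  moreover have "(\<Sum>j\<in>{M..N}. a j s * 0 ^ (j - M)) = a M s" for s
    using assms(4) by (subst sum.remove[of _ M]) (auto intro!: sum.neutral)
  ultimately show ?thesis by simp
qed

section \<open>Quotients of two homogeneous expansions at \<open>u\<close>\<close>

locale quotient_expansion =
  fixes g h :: "complex ^ 'd::finite \<Rightarrow> complex" and P Q :: "nat \<Rightarrow> 'd cpoly"
    and M :: nat and \<nu> :: complex
  assumes g_nonzero: "\<And>\<zeta>. unit_pt - \<zeta> \<in> polydisc \<Longrightarrow> g \<zeta> \<noteq> 0"
    and P_exp: "homog_expansion g P" and Q_exp: "homog_expansion h Q"
    and order_M: "(\<forall>j<M. P j = (\<lambda>_. 0)) \<and> P M \<noteq> (\<lambda>_. 0)"
    and nt_limit: "\<And>c. 1 < c \<Longrightarrow> ((\<lambda>\<zeta>. h \<zeta> / g \<zeta>) \<longlongrightarrow> \<nu>) (at 0 within AR c)"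
begin

lemma P_mpoly: "mpoly (P j)" and P_homog: "homog j (P j)" and Q_homog: "homog j (Q j)"
  using P_exp Q_exp by (auto simp: homog_expansion_def)

lemma P_below: "j < M \<Longrightarrow> P j = (\<lambda>_. 0)"
  using order_M by auto

lemma ex_common_expansion_bound:
  "\<exists>N. (\<forall>j>N. P j = (\<lambda>_. 0) \<and> Q j = (\<lambda>_. 0))
     \<and> (\<forall>\<zeta>. g \<zeta> = (\<Sum>j\<le>N. peval (P j) \<zeta>)) \<and> (\<forall>\<zeta>. h \<zeta> = (\<Sum>j\<le>N. peval (Q j) \<zeta>))"
proof -
  obtain N1 where N1: "\<forall>j>N1. P j = (\<lambda>_. 0)" "\<forall>\<zeta>. g \<zeta> = (\<Sum>j\<le>N1. peval (P j) \<zeta>)"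
    using P_exp by (auto simp: homog_expansion_def)
  obtain N2 where N2: "\<forall>j>N2. Q j = (\<lambda>_. 0)" "\<forall>\<zeta>. h \<zeta> = (\<Sum>j\<le>N2. peval (Q j) \<zeta>)"
    using Q_exp by (auto simp: homog_expansion_def)
  have "(\<Sum>j\<le>max N1 N2. peval (P j) \<zeta>) = (\<Sum>j\<le>N1. peval (P j) \<zeta>)"
       "(\<Sum>j\<le>max N1 N2. peval (Q j) \<zeta>) = (\<Sum>j\<le>N2. peval (Q j) \<zeta>)" for \<zeta>
    by (rule sum.mono_neutral_right; use N1 N2 in auto)+
  then show ?thesis using N1 N2 by (intro exI[of _ "max N1 N2"]) auto
qed

definition N where
  "N = (SOME N. (\<forall>j>N. P j = (\<lambda>_. 0) \<and> Q j = (\<lambda>_. 0))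
     \<and> (\<forall>\<zeta>. g \<zeta> = (\<Sum>j\<le>N. peval (P j) \<zeta>)) \<and> (\<forall>\<zeta>. h \<zeta> = (\<Sum>j\<le>N. peval (Q j) \<zeta>)))"

lemma P_above: "N < j \<Longrightarrow> P j = (\<lambda>_. 0)" and Q_above: "N < j \<Longrightarrow> Q j = (\<lambda>_. 0)"
  and g_eq_sum: "g \<zeta> = (\<Sum>j\<le>N. peval (P j) \<zeta>)" and h_eq_sum: "h \<zeta> = (\<Sum>j\<le>N. peval (Q j) \<zeta>)"
  using someI_ex[OF ex_common_expansion_bound] unfolding N_def[symmetric] by auto

lemma M_le_N: "M \<le> N"
  using P_above[of M] order_M by force

lemma g_scale: "g (t *s \<eta>) = (\<Sum>j\<le>N. peval (P j) \<eta> * t ^ j)"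
  by (simp add: g_eq_sum peval_homog_scale[OF P_homog] mult.commute)

lemma h_scale: "h (t *s \<eta>) = (\<Sum>j\<le>N. peval (Q j) \<eta> * t ^ j)"
  by (simp add: h_eq_sum peval_homog_scale[OF Q_homog] mult.commute)

lemma g_scale_lowest: "g (t *s \<eta>) = t ^ M * (\<Sum>j\<in>{M..N}. peval (P j) \<eta> * t ^ (j - M))"
proof -
  have "g (t *s \<eta>) = (\<Sum>j\<in>{M..N}. peval (P j) \<eta> * t ^ j)"
    unfolding g_scale by (rule sum.mono_neutral_right) (auto simp: P_below)
  also have "\<dots> = (\<Sum>j\<in>{M..N}. t ^ M * (peval (P j) \<eta> * t ^ (j - M)))"
    by (intro sum.cong refl) (simp add: power_add[symmetric])
  finally show ?thesis by (simp add: sum_distrib_left)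
qed

lemma rescaled_g_nonzero:
  assumes "\<And>i. \<delta> < Re (z $ i)" "\<And>i. norm (z $ i) \<le> K" "0 < \<delta>" "0 < t" "t \<le> \<delta> / (K\<^sup>2 + 1)"
  shows "(\<Sum>j\<in>{M..N}. peval (P j) z * of_real t ^ (j - M)) \<noteq> 0"
proof -
  have "unit_pt - t *\<^sub>R z \<in> polydisc"
    using assms by (rule unit_pt_minus_in_polydisc)
  then show ?thesis
    using g_nonzero g_scale_lowest[of "of_real t" z] by (auto simp: of_real_smult)
qed

lemma ex_P_M_nonzero_in_ball: "\<exists>\<eta> \<in> ball unit_pt 1. peval (P M) \<eta> \<noteq> 0"
proof (rule ccontr)
  assume "\<not> ?thesis"
  then have "\<And>\<eta>. \<eta> \<in> ball unit_pt 1 \<Longrightarrow> peval (P M) \<eta> = 0" by blast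
  then have "peval (P M) z = 0" for z
    by (rule poly_on_lines_eq_0_if_ball[OF poly_on_lines_peval zero_less_one])
  with ex_peval_nonzero[OF P_mpoly] order_M show False by blast
qed

lemma P_M_nonzero_on_RHP:
  assumes \<zeta>0: "\<And>i. 0 < Re (\<zeta>0 $ i)"
  shows "peval (P M) \<zeta>0 \<noteq> 0"
proof
  assume z0: "peval (P M) \<zeta>0 = 0"
  obtain \<eta> where \<eta>: "\<eta> \<in> ball unit_pt 1" "peval (P M) \<eta> \<noteq> 0"
    using ex_P_M_nonzero_in_ball by blast
  define x where "x s = \<zeta>0 + s *s (\<eta> - \<zeta>0)" for s
  obtain S \<delta> K where S: "open S" "connected S" "0 \<in> S" "1 \<in> S" "0 < \<delta>"
    and x: "\<And>s i. s \<in> S \<Longrightarrow> \<delta> < Re (x s $ i)" "\<And>s i. s \<in> S \<Longrightarrow> norm (x s $ i) \<le> K"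
    unfolding x_def using ex_line_region_Re_pos[OF \<zeta>0 ball_unit_pt_Re_pos[OF \<eta>(1)]] by blast
  define \<tau> where "\<tau> m = \<delta> / (K\<^sup>2 + 1) * inverse (real (Suc m))" for m
  have \<tau>: "0 < \<tau> m" "\<tau> m \<le> \<delta> / (K\<^sup>2 + 1)" for m
    using \<open>0 < \<delta>\<close> mult_right_le_one_le[of "\<delta> / (K\<^sup>2 + 1)" "inverse (real (Suc m))"]
    by (auto simp: \<tau>_def add_nonneg_pos inverse_le_1_iff)
  have "\<tau> \<longlonglongrightarrow> 0"
    unfolding \<tau>_def by (rule tendsto_mult_right_zero[OF LIMSEQ_inverse_real_of_nat])
  from tendsto_of_real[OF this] have \<tau>_lim: "(\<lambda>m. complex_of_real (\<tau> m)) \<longlonglongrightarrow> 0"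
    by simp
  define F where "F m s = (\<Sum>j\<in>{M..N}. peval (P j) (x s) * of_real (\<tau> m) ^ (j - M))" for m s
  define G where "G s = peval (P M) (x s)" for s
  have F_nonzero: "F m s \<noteq> 0" if "s \<in> S" for m s
    unfolding F_def using x[OF that] \<open>0 < \<delta>\<close> \<tau> by (intro rescaled_g_nonzero) auto
  have "x = (\<lambda>s. \<chi> i. \<zeta>0 $ i + s * (\<eta> - \<zeta>0) $ i)" by (simp add: vec_eq_iff x_def fun_eq_iff right_diff_distrib)
  then have "continuous_on C x" for C by (simp add: continuous_intros)
  then have "continuous_on C (\<lambda>s. peval (P j) (x s))" for C j
    by (rule continuous_on_compose2[OF continuous_on_peval[of UNIV]]) auto
  then have F_lim: "uniform_limit C F G sequentially" if "compact C" for C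
    unfolding F_def G_def by (rule uniform_limit_lowest_order[OF that _ \<tau>_lim M_le_N])
  have poly_F: "poly_on_lines (\<lambda>z. \<Sum>j\<in>{M..N}. peval (P j) z * of_real (\<tau> m) ^ (j - M))" for m
    by (intro poly_on_lines_sum poly_on_lines_mult poly_on_lines_peval poly_on_lines_const) auto
  have holo: "F m holomorphic_on S" "G holomorphic_on S" for m
    unfolding F_def G_def x_def by (intro holomorphic_on_line poly_F poly_on_lines_peval)+
  have "G 0 = 0" "G 1 \<noteq> 0" using z0 \<eta>(2) by (simp_all add: G_def x_def)
  then have "\<not> G constant_on S"
    using S unfolding constant_on_def by metis
  then have "G 0 \<noteq> 0"
    using Hurwitz_no_zeros[OF S(1,2) holo F_lim _ F_nonzero S(3)] by blast
  with \<open>G 0 = 0\<close> show False by contradiction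
qed

lemma g_ray_bound:
  assumes "0 \<le> t" "t \<le> 1"
  shows "norm (g (t *\<^sub>R \<eta>)) \<le> (real N + 1) * (\<Sum>j\<le>N. norm (peval (P j) \<eta>)) * t ^ M"
  unfolding g_scale[of "of_real t", unfolded of_real_smult]
  by (rule norm_sum_le_if_low_zero) (auto simp: P_below assms intro: member_le_sum)

lemma remainder_little_o_on_ray:
  assumes "\<eta> \<in> AR c"
    and small: "\<forall>\<epsilon>>0. eventually (\<lambda>t. norm (h (t *\<^sub>R \<eta>) / g (t *\<^sub>R \<eta>) - L t) \<le> \<epsilon> * t ^ K) (at_right 0)"
  shows "\<forall>\<epsilon>>0. eventually (\<lambda>t. norm (h (t *\<^sub>R \<eta>) - L t * g (t *\<^sub>R \<eta>)) \<le> \<epsilon> * t ^ (M + K)) (at_right 0)"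
proof (intro allI impI)
  fix \<epsilon> :: real assume "0 < \<epsilon>"
  define C where "C = (real N + 1) * (\<Sum>j\<le>N. norm (peval (P j) \<eta>))"
  have "0 \<le> C" by (simp add: C_def sum_nonneg)
  then have pos: "0 < \<epsilon> / (C + 1)" using \<open>0 < \<epsilon>\<close> by simp
  with small have "eventually (\<lambda>t. norm (h (t *\<^sub>R \<eta>) / g (t *\<^sub>R \<eta>) - L t) \<le> \<epsilon> / (C + 1) * t ^ K) (at_right 0)"
    by blast
  moreover have "eventually (\<lambda>t. g (t *\<^sub>R \<eta>) \<noteq> 0) (at_right 0)"
    using eventually_ray_in_polydisc[OF AR_Re_pos[OF assms(1)]] by eventually_elim (rule g_nonzero)
  ultimately show "eventually (\<lambda>t. norm (h (t *\<^sub>R \<eta>) - L t * g (t *\<^sub>R \<eta>)) \<le> \<epsilon> * t ^ (M + K)) (at_right 0)"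
    using eventually_at_right_0_less_1
  proof eventually_elim
    case (elim t)
    have "h (t *\<^sub>R \<eta>) - L t * g (t *\<^sub>R \<eta>) = (h (t *\<^sub>R \<eta>) / g (t *\<^sub>R \<eta>) - L t) * g (t *\<^sub>R \<eta>)"
      using elim(2) by (simp add: field_simps)
    then have "norm (h (t *\<^sub>R \<eta>) - L t * g (t *\<^sub>R \<eta>))
        = norm (h (t *\<^sub>R \<eta>) / g (t *\<^sub>R \<eta>) - L t) * norm (g (t *\<^sub>R \<eta>))"
      by (simp add: norm_mult)
    also have "\<dots> \<le> (\<epsilon> / (C + 1) * t ^ K) * (C * t ^ M)"
      using elim g_ray_bound[of t \<eta>] pos unfolding C_def[symmetric]
      by (intro mult_mono) (auto simp del: times_divide_eq_left)
    also have "\<dots> = (\<epsilon> * t ^ (M + K)) * (C / (C + 1))" by (simp add: field_simps power_add)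
    also have "\<dots> \<le> \<epsilon> * t ^ (M + K)"
      using \<open>0 \<le> C\<close> \<open>0 < \<epsilon>\<close> elim(3) by (intro mult_left_le) auto
    finally show ?case .
  qed
qed

definition remainder_poly :: "(nat \<Rightarrow> complex ^ 'd \<Rightarrow> complex) \<Rightarrow> nat \<Rightarrow> complex ^ 'd \<Rightarrow> complex poly" where
  "remainder_poly A K \<eta> = poly_upto (\<lambda>j. peval (Q j) \<eta>) N
     - poly_upto (\<lambda>i. A i \<eta>) K * poly_upto (\<lambda>j. peval (P j) \<eta>) N"

lemma poly_remainder_poly:
  assumes "L (t *\<^sub>R \<eta>) = (\<Sum>i\<le>K. A i \<eta> * of_real t ^ i)"
  shows "poly (remainder_poly A K \<eta>) (of_real t) = h (t *\<^sub>R \<eta>) - L (t *\<^sub>R \<eta>) * g (t *\<^sub>R \<eta>)"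
  using g_scale[of "of_real t" \<eta>] h_scale[of "of_real t" \<eta>] assms
  by (simp add: remainder_poly_def poly_poly_upto of_real_smult)

lemma coeff_remainder_poly:
  assumes "\<And>i. K < i \<Longrightarrow> A i \<eta> = 0"
  shows "coeff (remainder_poly A K \<eta>) m = peval (Q m) \<eta> - (\<Sum>i\<le>m. A i \<eta> * peval (P (m - i)) \<eta>)"
proof -
  have "coeff (poly_upto (\<lambda>i. A i \<eta>) K) i = A i \<eta>" for i
    using assms[of i] by (auto simp: coeff_poly_upto)
  moreover have "coeff (poly_upto (\<lambda>j. peval (P j) \<eta>) N) j = peval (P j) \<eta>"
    "coeff (poly_upto (\<lambda>j. peval (Q j) \<eta>) N) j = peval (Q j) \<eta>" for j
    using P_above[of j] Q_above[of j] by (auto simp: coeff_poly_upto)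
  ultimately show ?thesis by (simp add: remainder_poly_def coeff_mult)
qed

lemma degree_remainder_poly: "degree (remainder_poly A K \<eta>) \<le> N + K"
proof -
  have "degree (poly_upto (\<lambda>i. A i \<eta>) K * poly_upto (\<lambda>j. peval (P j) \<eta>) N) \<le> K + N"
    by (intro order.trans[OF degree_mult_le] add_mono degree_poly_upto)
  then show ?thesis
    unfolding remainder_poly_def using degree_poly_upto[of "\<lambda>j. peval (Q j) \<eta>" N]
    by (intro order.trans[OF degree_diff_le_max]) auto
qed

lemma remainder_coeff_eq_0_if_little_o:
  assumes L: "\<And>t \<eta>. L (t *\<^sub>R \<eta>) = (\<Sum>i\<le>K. A i \<eta> * of_real t ^ i)"
    and A: "\<And>i. poly_on_lines (A i)" "\<And>i \<eta>. K < i \<Longrightarrow> A i \<eta> = 0"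
    and small: "little_o_AR i 2 K (\<lambda>\<zeta>. h \<zeta> / g \<zeta> - L \<zeta>)" and "m \<le> M + K"
  shows "coeff (remainder_poly A K \<eta>) m = 0"
proof (rule poly_on_lines_eq_0_if_ball)
  have "poly_on_lines (\<lambda>\<eta>. peval (Q m) \<eta> - (\<Sum>i\<le>m. A i \<eta> * peval (P (m - i)) \<eta>))"
    by (intro poly_on_lines_diff poly_on_lines_sum poly_on_lines_mult poly_on_lines_peval A(1)) auto
  then show "poly_on_lines (\<lambda>\<eta>. coeff (remainder_poly A K \<eta>) m)"
    by (simp add: coeff_remainder_poly A(2))
  show "0 < (2 - 1) / (2 + 1 :: real)" by simp
  fix \<eta> :: "complex ^ 'd" assume "\<eta> \<in> ball unit_pt ((2 - 1) / (2 + 1))"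
  then have \<eta>: "\<eta> \<in> AR 2" using ball_unit_pt_subset_AR[of 2] by auto
  have "\<forall>\<epsilon>>0. eventually (\<lambda>t. norm (poly (remainder_poly A K \<eta>) (of_real t)) \<le> \<epsilon> * t ^ (M + K)) (at_right 0)"
    unfolding poly_remainder_poly[where L = L, OF L]
    by (rule remainder_little_o_on_ray[OF \<eta>]) (use little_o_AR_on_ray[OF small \<eta>] in auto)
  then show "coeff (remainder_poly A K \<eta>) m = 0"
    by (rule coeff_eq_0_if_poly_little_o) (fact \<open>m \<le> M + K\<close>)
qed

lemma Q_eq_nu_P_below:
  assumes "m \<le> M"
  shows "peval (Q m) \<eta> = \<nu> * peval (P m) \<eta>"
proof -
  define A :: "nat \<Rightarrow> complex ^ 'd \<Rightarrow> complex" where "A i \<eta> = (if i = 0 then \<nu> else 0)" for i \<eta>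
  have "poly_on_lines (A i)" for i unfolding A_def by (rule poly_on_lines_const)
  have "((\<lambda>\<zeta>. h \<zeta> / g \<zeta> - \<nu>) \<longlongrightarrow> 0) (at 0 within AR 2)"
    using tendsto_diff[OF nt_limit tendsto_const, of 2 \<nu>] by simp
  then have "coeff (remainder_poly A 0 \<eta>) m = 0"
    using assms
    by (intro remainder_coeff_eq_0_if_little_o[where i = undefined and L = "\<lambda>_. \<nu>"])
       (auto simp: A_def \<open>\<And>i. poly_on_lines (A i)\<close> intro: little_o_AR_0_if_tendsto)
  moreover have "(\<Sum>i\<le>m. A i \<eta> * peval (P (m - i)) \<eta>) = \<nu> * peval (P m) \<eta>"
    using convolution_below[of M "\<lambda>l. peval (P l) \<eta>", OF _ assms] by (simp add: P_below A_def)
  ultimately show ?thesis by (subst (asm) coeff_remainder_poly) (auto simp: A_def)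
qed

lemma convolution_eq_iff_recurrence:
  assumes "a 0 = \<nu>"
  shows "(\<forall>m\<le>M + k. peval (Q m) \<eta> = (\<Sum>i\<le>m. a i * peval (P (m - i)) \<eta>))
    \<longleftrightarrow> (\<forall>j\<in>{1..k}. peval (P M) \<eta> * a j = peval (Q (M + j)) \<eta> - \<nu> * peval (P (M + j)) \<eta>
                        - (\<Sum>i\<in>{1..<j}. a i * peval (P (M + j - i)) \<eta>))"
proof -
  have below: "\<And>l. l < M \<Longrightarrow> peval (P l) \<eta> = 0" by (simp add: P_below)
  have "peval (Q m) \<eta> = (\<Sum>i\<le>m. a i * peval (P (m - i)) \<eta>)" if "m \<le> M" for m
    using convolution_below[of M "\<lambda>l. peval (P l) \<eta>", OF below that] Q_eq_nu_P_below[OF that] assms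
    by simp
  moreover note all_le_add_split[of M k]
  moreover have "peval (Q (M + j)) \<eta> = (\<Sum>i\<le>M + j. a i * peval (P (M + j - i)) \<eta>)
    \<longleftrightarrow> peval (P M) \<eta> * a j = peval (Q (M + j)) \<eta> - \<nu> * peval (P (M + j)) \<eta>
          - (\<Sum>i\<in>{1..<j}. a i * peval (P (M + j - i)) \<eta>)" if "1 \<le> j" for j
    using convolution_split[of M "\<lambda>l. peval (P l) \<eta>", OF below that, of a] assms
    by (auto simp: algebra_simps)
  ultimately show ?thesis by auto
qed

lemma g_lower_bound_on_ray:
  assumes "\<And>j. norm (peval (P j) \<eta>) \<le> B" "\<delta> \<le> norm (peval (P M) \<eta>)"
    and "0 \<le> r" "r \<le> 1" "2 * ((real N + 1) * B * r) \<le> \<delta>"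
  shows "\<delta> / 2 * r ^ M \<le> norm (g (r *\<^sub>R \<eta>))"
proof -
  define b where "b j = (if j = M then 0 else peval (P j) \<eta>)" for j
  have "g (r *\<^sub>R \<eta>) = (\<Sum>j\<le>N. b j * of_real r ^ j + (if j = M then peval (P M) \<eta> * of_real r ^ M else 0))"
    unfolding g_scale[of "of_real r", unfolded of_real_smult] by (intro sum.cong) (auto simp: b_def)
  also have "\<dots> = (\<Sum>j\<le>N. b j * of_real r ^ j) + peval (P M) \<eta> * of_real r ^ M"
    using M_le_N by (simp add: sum.distrib)
  finally have "g (r *\<^sub>R \<eta>) = (\<Sum>j\<le>N. b j * of_real r ^ j) + peval (P M) \<eta> * of_real r ^ M" .
  moreover have "norm (\<Sum>j\<le>N. b j * of_real r ^ j) \<le> (real N + 1) * B * r ^ Suc M"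
    using assms(1,3,4) order_trans[OF norm_ge_zero assms(1)]
    by (intro norm_sum_le_if_low_zero) (auto simp: b_def P_below)
  moreover have "\<delta> * r ^ M \<le> norm (peval (P M) \<eta> * of_real r ^ M)"
    using assms(2,3) by (simp add: norm_mult norm_power mult_right_mono)
  moreover have "(real N + 1) * B * r ^ Suc M \<le> \<delta> / 2 * r ^ M"
    using assms(3,5) mult_right_mono[of "2 * ((real N + 1) * B * r)" \<delta> "r ^ M"] by simp
  moreover note norm_diff_ineq[of "peval (P M) \<eta> * of_real r ^ M" "\<Sum>j\<le>N. b j * of_real r ^ j"]
  ultimately show ?thesis by (simp add: add.commute)
qed

lemma remainder_bound_on_ray:
  assumes "L (r *\<^sub>R \<eta>) = (\<Sum>i\<le>K. A i \<eta> * of_real r ^ i)"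
    and "\<And>m. m \<le> M + K \<Longrightarrow> coeff (remainder_poly A K \<eta>) m = 0"
    and "\<And>m. m \<le> N + K \<Longrightarrow> norm (coeff (remainder_poly A K \<eta>) m) \<le> B" "0 \<le> r" "r \<le> 1"
  shows "norm (h (r *\<^sub>R \<eta>) - L (r *\<^sub>R \<eta>) * g (r *\<^sub>R \<eta>)) \<le> (real (N + K) + 1) * B * r ^ Suc (M + K)"
  unfolding poly_remainder_poly[where L = L and A = A and K = K, OF assms(1), symmetric]
    poly_eq_sum_upto[OF degree_remainder_poly]
  using assms(2-) by (intro norm_sum_le_if_low_zero) auto

lemma quotient_bound_on_ray:
  assumes L: "L (r *\<^sub>R \<eta>) = (\<Sum>i\<le>K. A i \<eta> * of_real r ^ i)"
    and vanish: "\<And>m. m \<le> M + K \<Longrightarrow> coeff (remainder_poly A K \<eta>) m = 0"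
    and BR: "\<And>m. m \<le> N + K \<Longrightarrow> norm (coeff (remainder_poly A K \<eta>) m) \<le> BR"
    and BP: "\<And>j. norm (peval (P j) \<eta>) \<le> BP" and \<delta>: "0 < \<delta>" "\<delta> \<le> norm (peval (P M) \<eta>)"
    and r: "0 < r" "r \<le> 1" "2 * ((real N + 1) * BP * r) \<le> \<delta>"
  shows "norm (h (r *\<^sub>R \<eta>) / g (r *\<^sub>R \<eta>) - L (r *\<^sub>R \<eta>)) \<le> (2 * (real (N + K) + 1) * BR / \<delta>) * r ^ Suc K"
proof -
  have g_low: "\<delta> / 2 * r ^ M \<le> norm (g (r *\<^sub>R \<eta>))"
    by (rule g_lower_bound_on_ray[OF BP \<delta>(2)]) (use r in auto)
  have E: "norm (h (r *\<^sub>R \<eta>) - L (r *\<^sub>R \<eta>) * g (r *\<^sub>R \<eta>)) \<le> (real (N + K) + 1) * BR * r ^ Suc (M + K)"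
    by (rule remainder_bound_on_ray[where L = L and A = A and K = K, OF L vanish BR]) (use r in auto)
  have "0 < \<delta> / 2 * r ^ M" using \<delta> r by simp
  with g_low have "g (r *\<^sub>R \<eta>) \<noteq> 0" by auto
  then have "norm (h (r *\<^sub>R \<eta>) / g (r *\<^sub>R \<eta>) - L (r *\<^sub>R \<eta>))
      = norm (h (r *\<^sub>R \<eta>) - L (r *\<^sub>R \<eta>) * g (r *\<^sub>R \<eta>)) / norm (g (r *\<^sub>R \<eta>))"
    by (simp add: norm_divide[symmetric] diff_divide_distrib)
  also have "\<dots> \<le> (real (N + K) + 1) * BR * r ^ Suc (M + K) / (\<delta> / 2 * r ^ M)"
    using g_low E order_trans[OF norm_ge_zero E] \<open>0 < \<delta> / 2 * r ^ M\<close> by (intro frac_le) auto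
  also have "\<dots> = (2 * (real (N + K) + 1) * BR / \<delta>) * r ^ Suc K"
    using \<delta> r by (simp add: field_simps power_add)
  finally show ?thesis .
qed

lemma rhp_box_bounds:
  assumes "1 < c" and A: "\<And>i. continuous_on UNIV (A i)" "\<And>i \<eta>. K < i \<Longrightarrow> A i \<eta> = 0"
  obtains \<delta> BP BR where "0 < \<delta>" "\<And>\<eta>. \<eta> \<in> rhp_box c \<Longrightarrow> \<delta> \<le> norm (peval (P M) \<eta>)"
    "\<And>j \<eta>. \<eta> \<in> rhp_box c \<Longrightarrow> norm (peval (P j) \<eta>) \<le> BP" "0 \<le> BP"
    "\<And>m \<eta>. m \<le> N + K \<Longrightarrow> \<eta> \<in> rhp_box c \<Longrightarrow> norm (coeff (remainder_poly A K \<eta>) m) \<le> BR"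
proof -
  have "\<exists>\<delta>>0. \<forall>\<eta>\<in>rhp_box c. \<delta> \<le> norm (peval (P M) \<eta>)"
    using rhp_box_Re_pos[of c] \<open>1 < c\<close>
    by (intro compact_lower_bound compact_rhp_box continuous_on_peval P_M_nonzero_on_RHP) auto
  then obtain \<delta> where \<delta>: "0 < \<delta>" "\<And>\<eta>. \<eta> \<in> rhp_box c \<Longrightarrow> \<delta> \<le> norm (peval (P M) \<eta>)" by blast
  obtain B where B: "\<And>j \<eta>. j \<in> {..N} \<Longrightarrow> \<eta> \<in> rhp_box c \<Longrightarrow> norm (peval (P j) \<eta>) \<le> B"
    using compact_uniform_bound[OF compact_rhp_box, where I = "{..N}" and f = "\<lambda>j. peval (P j)"]
      continuous_on_peval by blast
  have "norm (peval (P j) \<eta>) \<le> \<bar>B\<bar>" if "\<eta> \<in> rhp_box c" for j \<eta>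
    using B[OF _ that, of j] P_above[of j] by (cases "j \<le> N") auto
  moreover have "continuous_on (rhp_box c) (\<lambda>\<eta>. peval (Q m) \<eta> - (\<Sum>i\<le>m. A i \<eta> * peval (P (m - i)) \<eta>))" for m
    by (intro continuous_intros continuous_on_peval continuous_on_subset[OF A(1)]) auto
  then have "continuous_on (rhp_box c) (\<lambda>\<eta>. coeff (remainder_poly A K \<eta>) m)" for m
    by (simp add: coeff_remainder_poly A(2))
  then obtain BR where "\<And>m \<eta>. m \<in> {..N + K} \<Longrightarrow> \<eta> \<in> rhp_box c
      \<Longrightarrow> norm (coeff (remainder_poly A K \<eta>) m) \<le> BR"
    using compact_uniform_bound[OF compact_rhp_box, where I = "{..N + K}"
        and f = "\<lambda>m \<eta>. coeff (remainder_poly A K \<eta>) m"] by blast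
  ultimately show ?thesis using that[of \<delta> "\<bar>B\<bar>" BR] \<delta> by auto
qed

lemma little_o_if_remainder_coeffs_vanish:
  assumes L: "\<And>t \<eta>. L (t *\<^sub>R \<eta>) = (\<Sum>i\<le>K. A i \<eta> * of_real t ^ i)"
    and A: "\<And>i. continuous_on UNIV (A i)" "\<And>i \<eta>. K < i \<Longrightarrow> A i \<eta> = 0"
    and vanish: "\<And>\<eta> m. m \<le> M + K \<Longrightarrow> coeff (remainder_poly A K \<eta>) m = 0"
    and "1 < c"
  shows "little_o_AR i c K (\<lambda>\<zeta>. h \<zeta> / g \<zeta> - L \<zeta>)"
proof -
  obtain \<delta> B1 B2 where \<delta>: "0 < \<delta>" "\<And>\<eta>. \<eta> \<in> rhp_box c \<Longrightarrow> \<delta> \<le> norm (peval (P M) \<eta>)"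
    and B1: "\<And>j \<eta>. \<eta> \<in> rhp_box c \<Longrightarrow> norm (peval (P j) \<eta>) \<le> B1" "0 \<le> B1"
    and B2: "\<And>m \<eta>. m \<le> N + K \<Longrightarrow> \<eta> \<in> rhp_box c \<Longrightarrow> norm (coeff (remainder_poly A K \<eta>) m) \<le> B2"
    using rhp_box_bounds[where A = A and K = K, OF \<open>1 < c\<close> A] by blast
  define D where "D = 2 * (real N + 1) * (B1 + 1)"
  define d where "d = min 1 (\<delta> / D)"
  have "0 < D" using B1(2) by (simp add: D_def add_pos_nonneg)
  then have "0 < d" using \<delta> by (simp add: d_def)
  have "eventually (\<lambda>\<zeta>. \<zeta> \<in> AR c) (at 0 within AR c)"
    by (simp add: eventually_at_filter)
  then have "eventually (\<lambda>\<zeta>. \<zeta> \<in> AR c \<and> norm (\<zeta> $ i) < d) (at 0 within AR c)"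
    using eventually_norm_nth_less[OF \<open>0 < d\<close>] by (rule eventually_conj)
  then have "eventually (\<lambda>\<zeta>. norm (h \<zeta> / g \<zeta> - L \<zeta>)
      \<le> (2 * (real (N + K) + 1) * B2 / \<delta>) * norm (\<zeta> $ i) ^ Suc K) (at 0 within AR c)"
  proof eventually_elim
    case (elim \<zeta>)
    then obtain \<eta> where \<eta>: "\<eta> \<in> rhp_box c" and \<zeta>: "\<zeta> = norm (\<zeta> $ i) *\<^sub>R \<eta>" "0 < norm (\<zeta> $ i)"
      using AR_eq_scaled_rhp_box \<open>1 < c\<close> by blast
    have "norm (\<zeta> $ i) * D < \<delta>"
      using elim \<open>0 < D\<close> by (simp add: d_def pos_less_divide_eq)
    moreover have "2 * ((real N + 1) * B1 * norm (\<zeta> $ i)) \<le> norm (\<zeta> $ i) * D"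
      using \<zeta>(2) by (simp add: D_def algebra_simps)
    ultimately have "2 * ((real N + 1) * B1 * norm (\<zeta> $ i)) \<le> \<delta>" by linarith
    moreover have "norm (\<zeta> $ i) \<le> 1" using elim by (simp add: d_def)
    ultimately have "norm (h (norm (\<zeta> $ i) *\<^sub>R \<eta>) / g (norm (\<zeta> $ i) *\<^sub>R \<eta>) - L (norm (\<zeta> $ i) *\<^sub>R \<eta>))
        \<le> (2 * (real (N + K) + 1) * B2 / \<delta>) * norm (\<zeta> $ i) ^ Suc K"
      using \<delta> \<eta> \<zeta>(2) B1(1)[OF \<eta>] B2[OF _ \<eta>]
      by (intro quotient_bound_on_ray[where L = L and A = A and K = K, OF L vanish]) auto
    then show ?case using \<zeta>(1) by simp
  qed
  then show ?thesis by (rule little_o_AR_if_big_O_Suc)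
qed

definition division_recurrence :: "nat \<Rightarrow> (nat \<Rightarrow> 'd cpoly) \<Rightarrow> bool" where
  "division_recurrence k F \<longleftrightarrow> (\<forall>j\<in>{1..k}. mpoly (F j) \<and>
     (\<forall>\<zeta>. peval (P M) \<zeta> * peval (F j) \<zeta> = peval (Q (M + j)) \<zeta> - \<nu> * peval (P (M + j)) \<zeta>
                 - (\<Sum>i\<in>{1..<j}. peval (F i) \<zeta> * peval (P (M + j - i)) \<zeta>)))"

lemma division_recurrence_if_little_o:
  assumes L: "mpoly L" "deg_le k L"
    and small: "little_o_AR i 2 k (\<lambda>\<zeta>. h \<zeta> / g \<zeta> - peval L \<zeta>)"
  shows "division_recurrence k (\<lambda>j. homog_part j L)"
proof -
  define A where "A j = peval (homog_part j L)" for j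
  have A_ray: "peval L (t *\<^sub>R \<eta>) = (\<Sum>j\<le>k. A j \<eta> * of_real t ^ j)" for t \<eta>
    using peval_scale_eq_sum_homog_parts[OF L, of "of_real t" \<eta>] by (simp add: A_def of_real_smult)
  have A_above: "A j \<eta> = 0" if "k < j" for j \<eta>
    using homog_part_above_degree[OF L(2) that] by (simp add: A_def)
  have "coeff (remainder_poly A k \<eta>) m = 0" if "m \<le> M + k" for m \<eta>
    using remainder_coeff_eq_0_if_little_o[where L = "peval L", OF A_ray _ A_above small that]
    by (simp add: A_def[abs_def] poly_on_lines_peval)
  then have conv: "\<forall>m\<le>M + k. peval (Q m) \<eta> = (\<Sum>j\<le>m. A j \<eta> * peval (P (m - j)) \<eta>)" for \<eta>
    by (simp add: coeff_remainder_poly[where A = A, OF A_above])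
  have A0: "A 0 \<eta> = \<nu>" for \<eta>
  proof -
    obtain z0 where z0: "peval (P M) z0 \<noteq> 0" using ex_peval_nonzero[OF P_mpoly] order_M by blast
    have "peval (Q M) z0 = A 0 z0 * peval (P M) z0"
      using conv[of z0] convolution_below[of M "\<lambda>l. peval (P l) z0" M "\<lambda>j. A j z0"] by (simp add: P_below)
    then have "A 0 z0 = \<nu>" using Q_eq_nu_P_below[of M z0] z0 by simp
    moreover have "A 0 z = A 0 0" for z
      using peval_homog_scale[OF homog_homog_part, of 0 L 0 z] by (simp add: A_def)
    ultimately show ?thesis by metis
  qed
  show ?thesis
    unfolding division_recurrence_def
    using conv convolution_eq_iff_recurrence[where a = "\<lambda>j. A j _", OF A0] mpoly_homog_part[OF L(1)]
    by (auto simp: A_def)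
qed

lemma homog_if_mult_P_M_homog:
  assumes f: "poly_on_lines f"
    and scale: "\<And>t \<eta>. peval (P M) (t *s \<eta>) * f (t *s \<eta>) = t ^ (M + j) * (peval (P M) \<eta> * f \<eta>)"
  shows "f (t *s \<eta>) = t ^ j * f \<eta>"
proof (rule homog_scale_extend_0[OF f])
  fix t :: complex assume "t \<noteq> 0"
  have "peval (P M) \<eta> * (f (t *s \<eta>) - t ^ j * f \<eta>) = 0" for \<eta>
  proof -
    have "t ^ M * (peval (P M) \<eta> * (f (t *s \<eta>) - t ^ j * f \<eta>))
        = peval (P M) (t *s \<eta>) * f (t *s \<eta>) - t ^ (M + j) * (peval (P M) \<eta> * f \<eta>)"
      by (simp add: peval_homog_scale[OF P_homog] power_add algebra_simps)
    also have "\<dots> = 0" by (simp only: scale diff_self)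
    finally show ?thesis using \<open>t \<noteq> 0\<close> by simp
  qed
  moreover obtain z0 where "peval (P M) z0 \<noteq> 0" using ex_peval_nonzero[OF P_mpoly] order_M by blast
  moreover have "poly_on_lines (\<lambda>\<eta>. f (t *s \<eta>) - t ^ j * f \<eta>)"
    by (rule poly_on_lines_diff[OF poly_on_lines_scale[OF f] poly_on_lines_mult[OF poly_on_lines_const f]])
  ultimately have "f (t *s \<eta>) - t ^ j * f \<eta> = 0"
    using poly_on_lines_eq_0_if_mult_eq_0[OF _ continuous_on_peval] by blast
  then show "f (t *s \<eta>) = t ^ j * f \<eta>" by simp
qed

lemma division_recurrence_homog:
  assumes F: "division_recurrence k F" and "j \<in> {1..k}"
  shows "peval (F j) (t *s \<eta>) = t ^ j * peval (F j) \<eta>"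
  using \<open>j \<in> {1..k}\<close>
proof (induction j arbitrary: t \<eta> rule: less_induct)
  case (less j)
  define R where "R \<zeta> = peval (Q (M + j)) \<zeta> - \<nu> * peval (P (M + j)) \<zeta>
      - (\<Sum>i\<in>{1..<j}. peval (F i) \<zeta> * peval (P (M + j - i)) \<zeta>)" for \<zeta>
  have rec: "peval (P M) \<zeta> * peval (F j) \<zeta> = R \<zeta>" for \<zeta>
    using F less.prems by (simp add: division_recurrence_def R_def)
  have term_scale: "peval (F i) (t *s \<eta>) * peval (P (M + j - i)) (t *s \<eta>)
      = t ^ (M + j) * (peval (F i) \<eta> * peval (P (M + j - i)) \<eta>)" if "i \<in> {1..<j}" for i t \<eta>
  proof -
    have "t ^ i * t ^ (M + j - i) = t ^ (M + j)" using that by (simp add: power_add[symmetric])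
    moreover have "peval (F i) (t *s \<eta>) = t ^ i * peval (F i) \<eta>"
      using less.IH[of i] less.prems that by auto
    ultimately show ?thesis
      using peval_homog_scale[OF P_homog, of "M + j - i" t \<eta>] by (simp add: algebra_simps)
  qed
  have "(\<Sum>i\<in>{1..<j}. peval (F i) (t *s \<eta>) * peval (P (M + j - i)) (t *s \<eta>))
      = t ^ (M + j) * (\<Sum>i\<in>{1..<j}. peval (F i) \<eta> * peval (P (M + j - i)) \<eta>)" for t \<eta>
    unfolding sum_distrib_left by (rule sum.cong[OF refl term_scale])
  then have "R (t *s \<eta>) = t ^ (M + j) * R \<eta>" for t \<eta>
    by (simp add: R_def peval_homog_scale[OF P_homog] peval_homog_scale[OF Q_homog] algebra_simps)
  then show ?case
    by (intro homog_if_mult_P_M_homog[OF poly_on_lines_peval]) (simp add: rec)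
qed

lemma little_o_if_division_recurrence:
  assumes F: "division_recurrence k F" and "1 < c"
  shows "little_o_AR i c k (\<lambda>\<zeta>. h \<zeta> / g \<zeta> - (\<nu> + (\<Sum>j\<in>{1..k}. peval (F j) \<zeta>)))"
proof -
  define A where "A j = (if j = 0 then (\<lambda>_. \<nu>) else if j \<le> k then peval (F j) else (\<lambda>_. 0))" for j
  have L_ray: "\<nu> + (\<Sum>j\<in>{1..k}. peval (F j) (t *\<^sub>R \<eta>)) = (\<Sum>j\<le>k. A j \<eta> * of_real t ^ j)" for t \<eta>
  proof -
    have "{..k} = insert 0 {1..k}" by auto
    then show ?thesis
      using division_recurrence_homog[OF F, of _ "of_real t" \<eta>]
      by (simp add: A_def of_real_smult mult.commute)
  qed
  have A_cont: "continuous_on UNIV (A j)" for j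
    by (simp add: A_def continuous_on_peval)
  have A_above: "A j \<eta> = 0" if "k < j" for j \<eta>
    using that by (simp add: A_def)
  have vanish: "coeff (remainder_poly A k \<eta>) m = 0" if "m \<le> M + k" for \<eta> m
  proof -
    have "\<forall>m\<le>M + k. peval (Q m) \<eta> = (\<Sum>i\<le>m. A i \<eta> * peval (P (m - i)) \<eta>)"
      using convolution_eq_iff_recurrence[where a = "\<lambda>j. A j \<eta>"] F
      by (simp add: A_def division_recurrence_def)
    with that show ?thesis by (simp add: coeff_remainder_poly[where A = A, OF A_above])
  qed
  show ?thesis
    by (rule little_o_if_remainder_coeffs_vanish[where A = A, OF L_ray A_cont A_above vanish \<open>1 < c\<close>])
qed

lemma peval_taylor_poly_division_recurrence:
  assumes "division_recurrence k F"
  shows "peval (taylor_poly \<nu> k F) \<zeta> = \<nu> + (\<Sum>j\<in>{1..k}. peval (F j) \<zeta>)"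
proof -
  have F: "mpoly (F j)" if "j \<in> {1..k}" for j using assms that by (simp add: division_recurrence_def)
  have "peval (taylor_poly \<nu> k F) \<zeta> = \<nu> + (\<Sum>j\<in>{1..k}. peval (homog_part j (F j)) \<zeta>)"
    by (rule peval_taylor_poly) (rule F)
  also have "\<dots> = \<nu> + (\<Sum>j\<in>{1..k}. peval (F j) \<zeta>)"
    using F division_recurrence_homog[OF assms] by (simp add: peval_homog_part_eq)
  finally show ?thesis .
qed

end

theorem theorem14p8:
  fixes p :: "'d::finite cpoly" and n :: "'d \<Rightarrow> nat" and M k :: nat
    and P Q :: "nat \<Rightarrow> 'd cpoly" and \<nu> :: complex and i0 :: 'd
  assumes p_poly: "mpoly p"
    and nozero: "\<forall>z\<in>polydisc. peval p z \<noteq> 0"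
    and mdeg: "multideg p n"
    and P_exp: "homog_expansion (\<lambda>\<zeta>. peval p (unit_pt - \<zeta>)) P"
    and Q_exp: "homog_expansion (\<lambda>\<zeta>. peval (ptilde n p) (unit_pt - \<zeta>)) Q"
    and order_M: "(\<forall>j<M. P j = (\<lambda>_. 0)) \<and> P M \<noteq> (\<lambda>_. 0)"
    and ntv: "nt_value (\<lambda>z. peval (ptilde n p) z / peval p z) unit_pt \<nu>"
    and k: "k \<ge> 1"
  shows "(nt_Ck i0 k (\<lambda>z. peval (ptilde n p) z / peval p z) unit_pt \<longleftrightarrow>
           (\<exists>F :: nat \<Rightarrow> 'd cpoly. \<forall>j\<in>{1..k}. mpoly (F j) \<and>
              (\<forall>\<zeta>. peval (P M) \<zeta> * peval (F j) \<zeta> =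
                   peval (Q (M + j)) \<zeta> - \<nu> * peval (P (M + j)) \<zeta>
                   - (\<Sum>i\<in>{1..<j}. peval (F i) \<zeta> * peval (P (M + j - i)) \<zeta>))))
         \<and> (\<forall>F :: nat \<Rightarrow> 'd cpoly. (\<forall>j\<in>{1..k}. mpoly (F j) \<and>
              (\<forall>\<zeta>. peval (P M) \<zeta> * peval (F j) \<zeta> =
                   peval (Q (M + j)) \<zeta> - \<nu> * peval (P (M + j)) \<zeta>
                   - (\<Sum>i\<in>{1..<j}. peval (F i) \<zeta> * peval (P (M + j - i)) \<zeta>)))
           \<longrightarrow> (\<forall>c>1. little_o_AR i0 c k
                 (\<lambda>\<zeta>. peval (ptilde n p) (unit_pt - \<zeta>) / peval p (unit_pt - \<zeta>)
                       - (\<nu> + (\<Sum>j\<in>{1..k}. peval (F j) \<zeta>)))))"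
proof -
  interpret quotient_expansion "\<lambda>\<zeta>. peval p (unit_pt - \<zeta>)" "\<lambda>\<zeta>. peval (ptilde n p) (unit_pt - \<zeta>)" P Q M \<nu>
    using nozero P_exp Q_exp order_M ntv by unfold_locales (auto simp: nt_value_def)
  have "nt_Ck i0 k (\<lambda>z. peval (ptilde n p) z / peval p z) unit_pt \<longleftrightarrow> (\<exists>F. division_recurrence k F)"
  proof
    assume "nt_Ck i0 k (\<lambda>z. peval (ptilde n p) z / peval p z) unit_pt"
    then obtain L where "mpoly L" "deg_le k L"
      "little_o_AR i0 2 k (\<lambda>\<zeta>. peval (ptilde n p) (unit_pt - \<zeta>) / peval p (unit_pt - \<zeta>) - peval L \<zeta>)"
      unfolding nt_Ck_def by force
    then show "\<exists>F. division_recurrence k F" by (blast intro: division_recurrence_if_little_o)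
  next
    assume "\<exists>F. division_recurrence k F"
    then obtain F where F: "division_recurrence k F" ..
    then show "nt_Ck i0 k (\<lambda>z. peval (ptilde n p) z / peval p z) unit_pt"
      unfolding nt_Ck_def using little_o_if_division_recurrence[OF F]
      by (intro exI[of _ "taylor_poly \<nu> k F"] conjI mpoly_taylor_poly deg_le_taylor_poly)
         (auto simp: division_recurrence_def peval_taylor_poly_division_recurrence)
  qed
  then show ?thesis
    using little_o_if_division_recurrence unfolding division_recurrence_def by blast
qed

end
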